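(* In the setting and under standing assumptions (A) of the context, suppose additionally that $\mathcal W\subseteq\mathcal S$. Then $\|\Sigma\|\le BD$, $\Sigma$ is invertible with $\|\Sigma^{-1}\|\le\frac{1}{AC}$, and consequently $\|\Sigma\|\,\|\Sigma^{-1}\|\le\frac{BD}{AC}$. In particular, for every $f\in\mathcal H$ and $\delta\in(0,1)$, if \[ m\ge\frac{8}{3}\frac{BD}{A^2C^2}\,R\log(2n/\delta), \] then with probability at least $1-\delta$ the matrix $\widehat\Sigma_\Omega$ is invertible, the weighted least-squares problem $\operatorname{argmin}_{x\in\mathbb C^n}\sum_{t=1}^m p_{i_t}^{-1}|\langle W\iota_nx,s_{i_t}\rangle-\langle f,s_{i_t}\rangle|^2$ has a unique solution $\tilde x$, and $\tilde f:=W\iota_n\tilde x$ satisfies $\|f-\tilde f\|\le\|P_{\mathcal W_n^\perp}f\|(1+K_{n,\Omega}^2)^{1/2}$ with $K_{n,\Omega}:=\|W\iota_n\widehat\Sigma_\Omega^{-1}\widehat\Gamma_\Omega\|$.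
   Context: Let $\mathcal H$ be a separable complex Hilbert space, $\mathbb N=\{1,2,\dots\}$, and $\ell^2=\ell^2(\mathbb N)$ with canonical orthonormal basis $(e_j)_{j\in\mathbb N}$. For vectors $a,b$, $a\otimes b$ denotes the rank-one operator $x\mapsto\langle x,b\rangle a$. Let $\iota_n:\mathbb C^n\to\ell^2$, $\iota_n(x_1,\dots,x_n)=(x_1,\dots,x_n,0,0,\dots)$. Let $(s_k)_{k\in\mathbb N}\subset\mathcal H$ be a frame for its closed linear span $\mathcal S$: there are $0<A\le B$ with $A\|h\|^2\le\sum_k|\langle h,s_k\rangle|^2\le B\|h\|^2$ for all $h\in\mathcal S$. Let $(w_k)_{k\in\mathbb N}\subset\mathcal H$ be a Riesz basis for its closed linear span $\mathcal W$: there are $0<C\le D$ with $C\|x\|^2\le\|\sum_kx_kw_k\|^2\le D\|x\|^2$ for all $x\in\ell^2$. Synthesis operators $S,W:\ell^2\to\mathcal H$: $Sx=\sum_kx_ks_k$, $Wx=\sum_kx_kw_k$. Put $U:=S^*W$. Fix $n\in\mathbb N$, $\mathcal W_n:=\operatorname{span}\{w_1,\dots,w_n\}$, $P_{\mathcal W_n^\perp}$ the orthogonal projection onto $\mathcal W_n^\perp$. $\Sigma:=\iota_n^*U^*U\iota_n$, $v_j:=\iota_n^*U^*e_j$, $u_j:=P_{\mathcal W_n^\perp}s_j$. Let $p$ be a probability distribution on $\mathbb N$, $\operatorname{supp}(p)=\{j:p_j>0\}$, $R:=\sup_{j\in\operatorname{supp}(p)}\|v_j\|^2/p_j$, $R':=\sup_{j\in\operatorname{supp}(p)}\|u_j\|^2/p_j$.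 Let $i_1,\dots,i_m$ be i.i.d. with law $p$, $\Omega=\{i_1,\dots,i_m\}$, $Q_\Omega:=\frac1m\sum_{t=1}^m\frac{e_{i_t}\otimes e_{i_t}}{p_{i_t}}$, $\widehat\Sigma_\Omega:=\iota_n^*U^*Q_\Omega U\iota_n$, $\widehat\Gamma_\Omega:=\iota_n^*U^*Q_\Omega S^*P_{\mathcal W_n^\perp}$. Standing assumptions (A): (i) $\mathcal W\cap\mathcal S^\perp=\{0\}$; (ii) $R<\infty$, $R'<\infty$; (iii) $p_j>0$ whenever $v_j\neq0$. *)

theory Defs
  imports "HOL-Analysis.Analysis" "HOL-Probability.Probability"
begin

text \<open>HOL-Analysis only provides real inner product spaces, so we introduce complex
inner product spaces as a type class.  The inner product is linear in the FIRST
argument and conjugate-linear in the second (the convention of the paper, cf.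
(a \<otimes> b) x = <x,b> a), and the norm is the one induced by the inner product.
A complex Hilbert space is a type of this class that is also a complete_space.\<close>

class complex_inner = real_normed_vector +
  fixes scaleC :: "complex \<Rightarrow> 'a \<Rightarrow> 'a"  (infixr \<open>*\<^sub>C\<close> 75)
    and cinner :: "'a \<Rightarrow> 'a \<Rightarrow> complex"
  assumes scaleC_add_right: "a *\<^sub>C (x + y) = a *\<^sub>C x + a *\<^sub>C y"
    and scaleC_add_left: "(a + b) *\<^sub>C x = a *\<^sub>C x + b *\<^sub>C x"
    and scaleC_scaleC: "a *\<^sub>C (b *\<^sub>C x) = (a * b) *\<^sub>C x"
    and scaleC_one: "1 *\<^sub>C x = x"
    and scaleR_scaleC: "scaleR r x = complex_of_real r *\<^sub>C x"
    and cinner_add_left: "cinner (x + y) z = cinner x z + cinner y z"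
    and cinner_scaleC_left: "cinner (a *\<^sub>C x) y = a * cinner x y"
    and cinner_commute: "cinner x y = cnj (cinner y x)"
    and cinner_self_norm: "cinner x x = complex_of_real ((norm x)\<^sup>2)"


instantiation complex :: complex_inner
begin
definition scaleC_complex :: "complex \<Rightarrow> complex \<Rightarrow> complex" where
  "scaleC_complex a x = a * x"
definition cinner_complex :: "complex \<Rightarrow> complex \<Rightarrow> complex" where
  "cinner_complex x y = x * cnj y"
instance
proof
  fix a b :: complex and x y z :: complex and r :: real
  show "a *\<^sub>C (x + y) = a *\<^sub>C x + a *\<^sub>C y" by (simp add: scaleC_complex_def distrib_left)
  show "(a + b) *\<^sub>C x = a *\<^sub>C x + b *\<^sub>C x" by (simp add: scaleC_complex_def distrib_right)
  show "a *\<^sub>C (b *\<^sub>C x) = (a * b) *\<^sub>C x" by (simp add: scaleC_complex_def mult.assoc)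
  show "1 *\<^sub>C x = x" by (simp add: scaleC_complex_def)
  show "scaleR r x = complex_of_real r *\<^sub>C x" by (simp add: scaleC_complex_def scaleR_conv_of_real)
  show "cinner (x + y) z = cinner x z + cinner y z" by (simp add: cinner_complex_def distrib_right)
  show "cinner (a *\<^sub>C x) y = a * cinner x y" by (simp add: cinner_complex_def scaleC_complex_def mult.assoc)
  show "cinner x y = cnj (cinner y x)" by (simp add: cinner_complex_def mult.commute)
  show "cinner x x = complex_of_real ((norm x)\<^sup>2)" using complex_norm_square[of x] by (simp add: cinner_complex_def)
qed
end

definition cspan :: "'a::complex_inner set \<Rightarrow> 'a set" where
  "cspan X = {x. \<exists>F c. finite F \<and> F \<subseteq> X \<and> x = (\<Sum>v\<in>F. c v *\<^sub>C v)}"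

definition clspan :: "'a::complex_inner set \<Rightarrow> 'a set" where
  "clspan X = closure (cspan X)"

definition orth_comp :: "'a::complex_inner set \<Rightarrow> 'a set" where
  "orth_comp M = {x. \<forall>y\<in>M. cinner x y = 0}"

definition orth_proj :: "'a::complex_inner set \<Rightarrow> 'a \<Rightarrow> 'a" where
  "orth_proj M x = (THE y. y \<in> M \<and> x - y \<in> orth_comp M)"

section \<open>The sequence space l2(N) (N re-indexed from 0) and C^n inside it\<close>

definition l2 :: "(nat \<Rightarrow> complex) set" where
  "l2 = {x. summable (\<lambda>k. (cmod (x k))\<^sup>2)}"

definition l2norm :: "(nat \<Rightarrow> complex) \<Rightarrow> real" where
  "l2norm x = sqrt (\<Sum>k. (cmod (x k))\<^sup>2)"

text \<open>C^n, realised as the sequences supported on {0..<n}, with its Euclidean norm\<close>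
definition Cn :: "nat \<Rightarrow> (nat \<Rightarrow> complex) set" where
  "Cn n = {y. \<forall>k\<ge>n. y k = 0}"

definition cnorm :: "nat \<Rightarrow> (nat \<Rightarrow> complex) \<Rightarrow> real" where
  "cnorm n y = sqrt (\<Sum>k<n. (cmod (y k))\<^sup>2)"

definition mat_norm :: "nat \<Rightarrow> ((nat \<Rightarrow> complex) \<Rightarrow> (nat \<Rightarrow> complex)) \<Rightarrow> real" where
  "mat_norm n T = Sup ((\<lambda>y. cnorm n (T y)) ` {y \<in> Cn n. cnorm n y = 1})"

definition iota :: "nat \<Rightarrow> (nat \<Rightarrow> complex) \<Rightarrow> (nat \<Rightarrow> complex)" where
  "iota n y = (\<lambda>k. if k < n then y k else 0)"

definition iota_adj :: "nat \<Rightarrow> (nat \<Rightarrow> complex) \<Rightarrow> (nat \<Rightarrow> complex)" where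
  "iota_adj n x = (\<lambda>k. if k < n then x k else 0)"

definition e :: "nat \<Rightarrow> nat \<Rightarrow> complex" where
  "e j = (\<lambda>k. if k = j then 1 else 0)"

definition synth :: "(nat \<Rightarrow> 'a::complex_inner) \<Rightarrow> (nat \<Rightarrow> complex) \<Rightarrow> 'a" where
  "synth s x = (\<Sum>k. x k *\<^sub>C s k)"

definition anal :: "(nat \<Rightarrow> 'a::complex_inner) \<Rightarrow> 'a \<Rightarrow> (nat \<Rightarrow> complex)" where
  "anal s h = (\<lambda>k. cinner h (s k))"

definition is_frame_for_span :: "(nat \<Rightarrow> 'a::complex_inner) \<Rightarrow> real \<Rightarrow> real \<Rightarrow> bool" where
  "is_frame_for_span s A B \<longleftrightarrow> 0 < A \<and> A \<le> B \<and>
     (\<forall>h\<in>clspan (range s). summable (\<lambda>k. (cmod (cinner h (s k)))\<^sup>2) \<and>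
        A * (norm h)\<^sup>2 \<le> (\<Sum>k. (cmod (cinner h (s k)))\<^sup>2) \<and>
        (\<Sum>k. (cmod (cinner h (s k)))\<^sup>2) \<le> B * (norm h)\<^sup>2)"

definition is_riesz_basis_for_span :: "(nat \<Rightarrow> 'a::complex_inner) \<Rightarrow> real \<Rightarrow> real \<Rightarrow> bool" where
  "is_riesz_basis_for_span w C D \<longleftrightarrow> 0 < C \<and> C \<le> D \<and>
     (\<forall>x\<in>l2. summable (\<lambda>k. x k *\<^sub>C w k) \<and>
        C * (l2norm x)\<^sup>2 \<le> (norm (synth w x))\<^sup>2 \<and>
        (norm (synth w x))\<^sup>2 \<le> D * (l2norm x)\<^sup>2)"

definition Uop :: "(nat \<Rightarrow> 'a::complex_inner) \<Rightarrow> (nat \<Rightarrow> 'a) \<Rightarrow> (nat \<Rightarrow> complex) \<Rightarrow> (nat \<Rightarrow> complex)" where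
  "Uop s w x = anal s (synth w x)"

definition Uadj :: "(nat \<Rightarrow> 'a::complex_inner) \<Rightarrow> (nat \<Rightarrow> 'a) \<Rightarrow> (nat \<Rightarrow> complex) \<Rightarrow> (nat \<Rightarrow> complex)" where
  "Uadj s w z = anal w (synth s z)"

definition Sigma :: "(nat \<Rightarrow> 'a::complex_inner) \<Rightarrow> (nat \<Rightarrow> 'a) \<Rightarrow> nat \<Rightarrow> (nat \<Rightarrow> complex) \<Rightarrow> (nat \<Rightarrow> complex)" where
  "Sigma s w n = iota_adj n \<circ> Uadj s w \<circ> Uop s w \<circ> iota n"

text \<open>orthogonal projection onto W_n^\<bottom>, W_n = span{w_1,...,w_n} (here w 0, ..., w (n-1))\<close>
definition Pperp :: "(nat \<Rightarrow> 'a::complex_inner) \<Rightarrow> nat \<Rightarrow> 'a \<Rightarrow> 'a" where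
  "Pperp w n = orth_proj (orth_comp (cspan (w ` {..<n})))"

definition vvec :: "(nat \<Rightarrow> 'a::complex_inner) \<Rightarrow> (nat \<Rightarrow> 'a) \<Rightarrow> nat \<Rightarrow> nat \<Rightarrow> (nat \<Rightarrow> complex)" where
  "vvec s w n j = iota_adj n (Uadj s w (e j))"

definition uvec :: "(nat \<Rightarrow> 'a::complex_inner) \<Rightarrow> (nat \<Rightarrow> 'a) \<Rightarrow> nat \<Rightarrow> nat \<Rightarrow> 'a" where
  "uvec s w n j = Pperp w n (s j)"

definition Rconst :: "(nat \<Rightarrow> 'a::complex_inner) \<Rightarrow> (nat \<Rightarrow> 'a) \<Rightarrow> nat \<Rightarrow> nat pmf \<Rightarrow> real" where
  "Rconst s w n p = (SUP j\<in>set_pmf p. (cnorm n (vvec s w n j))\<^sup>2 / pmf p j)"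

definition Rconst' :: "(nat \<Rightarrow> 'a::complex_inner) \<Rightarrow> (nat \<Rightarrow> 'a) \<Rightarrow> nat \<Rightarrow> nat pmf \<Rightarrow> real" where
  "Rconst' s w n p = (SUP j\<in>set_pmf p. (norm (uvec s w n j))\<^sup>2 / pmf p j)"

text \<open>Q_Omega = (1/m) \<Sum>_{t} (e_{i_t} \<otimes> e_{i_t}) / p_{i_t}; the sample i_1..i_m is
  given as a function om with om t = i_{t+1} for t < m\<close>
definition Qop :: "nat pmf \<Rightarrow> nat \<Rightarrow> (nat \<Rightarrow> nat) \<Rightarrow> (nat \<Rightarrow> complex) \<Rightarrow> (nat \<Rightarrow> complex)" where
  "Qop p m om z = (\<lambda>k. (1 / of_nat m) *
      (\<Sum>t<m. if om t = k then z k / complex_of_real (pmf p (om t)) else 0))"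

definition Sigma_hat :: "(nat \<Rightarrow> 'a::complex_inner) \<Rightarrow> (nat \<Rightarrow> 'a) \<Rightarrow> nat \<Rightarrow> nat pmf \<Rightarrow> nat \<Rightarrow> (nat \<Rightarrow> nat)
     \<Rightarrow> (nat \<Rightarrow> complex) \<Rightarrow> (nat \<Rightarrow> complex)" where
  "Sigma_hat s w n p m om = iota_adj n \<circ> Uadj s w \<circ> Qop p m om \<circ> Uop s w \<circ> iota n"

definition Gamma_hat :: "(nat \<Rightarrow> 'a::complex_inner) \<Rightarrow> (nat \<Rightarrow> 'a) \<Rightarrow> nat \<Rightarrow> nat pmf \<Rightarrow> nat \<Rightarrow> (nat \<Rightarrow> nat)
     \<Rightarrow> 'a \<Rightarrow> (nat \<Rightarrow> complex)" where
  "Gamma_hat s w n p m om = iota_adj n \<circ> Uadj s w \<circ> Qop p m om \<circ> anal s \<circ> Pperp w n"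

definition wls_obj :: "(nat \<Rightarrow> 'a::complex_inner) \<Rightarrow> (nat \<Rightarrow> 'a) \<Rightarrow> nat \<Rightarrow> nat pmf \<Rightarrow> nat \<Rightarrow> (nat \<Rightarrow> nat)
     \<Rightarrow> 'a \<Rightarrow> (nat \<Rightarrow> complex) \<Rightarrow> real" where
  "wls_obj s w n p m om f x = (\<Sum>t<m. (1 / pmf p (om t)) *
      (cmod (cinner (synth w (iota n x)) (s (om t)) - cinner f (s (om t))))\<^sup>2)"

definition is_wls_solution :: "(nat \<Rightarrow> 'a::complex_inner) \<Rightarrow> (nat \<Rightarrow> 'a) \<Rightarrow> nat \<Rightarrow> nat pmf \<Rightarrow> nat
     \<Rightarrow> (nat \<Rightarrow> nat) \<Rightarrow> 'a \<Rightarrow> (nat \<Rightarrow> complex) \<Rightarrow> bool" where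
  "is_wls_solution s w n p m om f x \<longleftrightarrow> x \<in> Cn n \<and>
     (\<forall>y\<in>Cn n. wls_obj s w n p m om f x \<le> wls_obj s w n p m om f y)"

text \<open>the i.i.d. sample i_1,...,i_m with law p (indices t = 0..m-1)\<close>
definition sample :: "nat pmf \<Rightarrow> nat \<Rightarrow> (nat \<Rightarrow> nat) pmf" where
  "sample p m = Pi_pmf {..<m} 0 (\<lambda>_. p)"

end

theory Submission
  imports Defs "HOL-Library.Function_Algebras"
begin

text \<open>
  \<open>\<Sigma>\<close> is the Gram matrix of \<open>w\<^sub>1, \<dots>, w\<^sub>n\<close> for the frame quadratic form:
  \<open>\<langle>\<Sigma>x, x\<rangle> = \<Sum>\<^sub>k |\<langle>W\<iota>\<^sub>nx, s\<^sub>k\<rangle>|\<^sup>2\<close>, which lies between \<open>AC|x|\<^sup>2\<close> and \<open>BD|x|\<^sup>2\<close> by the frame and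
  Riesz bounds (\<open>W\<iota>\<^sub>nx\<close> lies in \<open>\<S>\<close> because \<open>\<W> \<subseteq> \<S>\<close>); this gives the bounds on \<open>\<Sigma>\<close> and \<open>\<Sigma>\<^sup>-\<^sup>1\<close>.

  Likewise \<open>\<langle>\<Sigma>\<^sub>\<Omega>x, x\<rangle> = m\<^sup>-\<^sup>1 \<Sum>\<^sub>t p\<^sub>i\<^sub>\<^sub>t\<^sup>-\<^sup>1 |\<langle>x, v\<^sub>i\<^sub>\<^sub>t\<rangle>|\<^sup>2\<close>, so \<open>\<Sigma>\<^sub>\<Omega>\<close> is invertible as soon as the
  sampled vectors \<open>v\<^sub>i\<^sub>\<^sub>t\<close> span \<open>\<complex>\<^sup>n\<close>. The weighted least-squares problem then has the unique
  solution given by its normal equations, and \<open>f - W\<iota>\<^sub>nx\<close> splits orthogonally into \<open>P\<^sub>\<W>\<^sub>\<^sub>n\<^sub>\<bottom> f\<close>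
  and \<open>W\<iota>\<^sub>n\<Sigma>\<^sub>\<Omega>\<^sup>-\<^sup>1\<Gamma>\<^sub>\<Omega> (P\<^sub>\<W>\<^sub>\<^sub>n\<^sub>\<bottom> f)\<close>.

  Instead of a matrix Chernoff bound, the probability that the samples fail to span is bounded
  by running Gram-Schmidt along the sample. If the span of the first samples has codimension
  \<open>d\<close>, let \<open>P\<close> be the orthogonal projection onto its complement; then
  \<open>\<Sum>\<^sub>j |Pv\<^sub>j|\<^sup>2 \<ge> AC tr P = AC d\<close> while \<open>|Pv\<^sub>j|\<^sup>2 \<le> R p\<^sub>j\<close>, so the next sample lowers the codimension
  with probability at least \<open>AC d / R\<close>. Hence the expected codimension after \<open>m\<close> samples is at
  most \<open>n (1 - AC/R)\<^sup>m \<le> n e\<^sup>-\<^sup>m\<^sup>A\<^sup>C\<^sup>/\<^sup>R \<le> \<delta>\<close> (using \<open>BD \<ge> AC\<close>), and Markov's inequality concludes.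
\<close>

section \<open>Complex inner product spaces\<close>

lemma scaleC_zero_left [simp]: "(0::complex) *\<^sub>C x = (0::'a::complex_inner)"
proof -
  have "(0::complex) *\<^sub>C x = 0 *\<^sub>C x + 0 *\<^sub>C x" by (simp flip: scaleC_add_left)
  then show ?thesis by simp
qed

lemma scaleC_zero_right [simp]: "a *\<^sub>C (0::'a::complex_inner) = 0"
proof -
  have "a *\<^sub>C (0::'a) = a *\<^sub>C 0 + a *\<^sub>C 0" by (simp flip: scaleC_add_right)
  then show ?thesis by simp
qed

lemma scaleC_minus_left: "(- a) *\<^sub>C x = - (a *\<^sub>C (x::'a::complex_inner))"
proof -
  have "a *\<^sub>C x + (- a) *\<^sub>C x = 0" by (simp flip: scaleC_add_left)
  then show ?thesis by (simp add: eq_neg_iff_add_eq_0 add.commute)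
qed

lemma scaleC_diff_left: "(a - b) *\<^sub>C x = a *\<^sub>C x - b *\<^sub>C (x::'a::complex_inner)"
  using scaleC_add_left[of a "- b" x] by (simp add: scaleC_minus_left)

lemma scaleC_sum_left: "(\<Sum>i\<in>I. c i) *\<^sub>C (x::'a::complex_inner) = (\<Sum>i\<in>I. c i *\<^sub>C x)"
  by (induction I rule: infinite_finite_induct) (auto simp: scaleC_add_left)

lemma scaleC_sum_right: "a *\<^sub>C (\<Sum>i\<in>I. f i) = (\<Sum>i\<in>I. a *\<^sub>C (f i::'a::complex_inner))"
  by (induction I rule: infinite_finite_induct) (auto simp: scaleC_add_right)

lemma cinner_zero_left [simp]: "cinner (0::'a::complex_inner) y = 0"
  using cinner_add_left[of "0::'a" 0 y] by simp

lemma cinner_add_right: "cinner x (y + z) = cinner x y + cinner (x::'a::complex_inner) z"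
  by (metis cinner_add_left cinner_commute complex_cnj_add)

lemma cinner_zero_right [simp]: "cinner (x::'a::complex_inner) 0 = 0"
  by (subst cinner_commute) simp

lemma cinner_scaleC_right: "cinner x (a *\<^sub>C y) = cnj a * cinner (x::'a::complex_inner) y"
  by (metis cinner_commute cinner_scaleC_left complex_cnj_mult)

lemma cinner_minus_left: "cinner (- x) y = - cinner (x::'a::complex_inner) y"
  using cinner_add_left[of x "- x" y] by (simp add: eq_neg_iff_add_eq_0 add.commute)

lemma cinner_minus_right: "cinner x (- y) = - cinner (x::'a::complex_inner) y"
  using cinner_add_right[of x y "- y"] by (simp add: eq_neg_iff_add_eq_0 add.commute)

lemma cinner_diff_left: "cinner (x - y) z = cinner x z - cinner (y::'a::complex_inner) z"
  using cinner_add_left[of x "- y" z] by (simp add: cinner_minus_left)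

lemma cinner_sum_left: "cinner (\<Sum>i\<in>I. f i) y = (\<Sum>i\<in>I. cinner (f i) (y::'a::complex_inner))"
  by (induction I rule: infinite_finite_induct) (auto simp: cinner_add_left)

lemma cinner_sum_right: "cinner x (\<Sum>i\<in>I. f i) = (\<Sum>i\<in>I. cinner (x::'a::complex_inner) (f i))"
  by (induction I rule: infinite_finite_induct) (auto simp: cinner_add_right)

lemma cinner_scaleR_left: "cinner (r *\<^sub>R x) y = complex_of_real r * cinner (x::'a::complex_inner) y"
  by (simp add: scaleR_scaleC cinner_scaleC_left)

lemma Re_cinner_self: "Re (cinner x (x::'a::complex_inner)) = (norm x)\<^sup>2"
  by (simp add: cinner_self_norm)

lemma norm_scaleC: "norm (a *\<^sub>C (x::'a::complex_inner)) = cmod a * norm x"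
proof -
  have "complex_of_real ((norm (a *\<^sub>C x))\<^sup>2) = cinner (a *\<^sub>C x) (a *\<^sub>C x)"
    by (simp only: cinner_self_norm)
  also have "\<dots> = (a * cnj a) * cinner x x"
    by (simp add: cinner_scaleC_left cinner_scaleC_right mult.assoc)
  also have "\<dots> = complex_of_real ((cmod a * norm x)\<^sup>2)"
    by (simp only: complex_norm_square[symmetric] cinner_self_norm of_real_mult[symmetric]
        power_mult_distrib)
  finally have "(norm (a *\<^sub>C x))\<^sup>2 = (cmod a * norm x)\<^sup>2" by (simp only: of_real_eq_iff)
  then show ?thesis by (simp add: power2_eq_iff_nonneg)
qed

lemma norm_add_Pythagorean_cinner:
  assumes "cinner x y = 0"
  shows "(norm (x + (y::'a::complex_inner)))\<^sup>2 = (norm x)\<^sup>2 + (norm y)\<^sup>2"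
proof -
  have yx: "cinner y x = 0" using assms cinner_commute[of y x] by simp
  have "complex_of_real ((norm (x + y))\<^sup>2) = cinner (x + y) (x + y)"
    by (simp only: cinner_self_norm)
  also have "\<dots> = cinner x x + cinner y y"
    by (simp add: cinner_add_left cinner_add_right assms yx)
  also have "\<dots> = complex_of_real ((norm x)\<^sup>2 + (norm y)\<^sup>2)"
    by (simp only: cinner_self_norm of_real_add)
  finally show ?thesis by (simp only: of_real_eq_iff)
qed

lemma norm_diff_Pythagorean_cinner:
  assumes "cinner x y = 0"
  shows "(norm (x - (y::'a::complex_inner)))\<^sup>2 = (norm x)\<^sup>2 + (norm y)\<^sup>2"
  using norm_add_Pythagorean_cinner[of x "- y"] assms by (simp add: cinner_minus_right)

lemma norm_cinner_le: "cmod (cinner x y) \<le> norm x * norm (y::'a::complex_inner)"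
proof (cases "y = 0")
  case False
  then have ny: "norm y > 0" by simp
  define a where "a = cinner x y / complex_of_real ((norm y)\<^sup>2)"
  have "cinner (x - a *\<^sub>C y) y = 0"
    using ny by (simp add: a_def cinner_diff_left cinner_scaleC_left cinner_self_norm)
  then have "cinner (x - a *\<^sub>C y) (a *\<^sub>C y) = 0" by (simp add: cinner_scaleC_right)
  then have "(norm x)\<^sup>2 = (norm (x - a *\<^sub>C y))\<^sup>2 + (norm (a *\<^sub>C y))\<^sup>2"
    by (metis norm_add_Pythagorean_cinner diff_add_cancel)
  then have "cmod a * norm y \<le> norm x"
    by (metis abs_norm_cancel le_add_same_cancel2 norm_scaleC power2_le_iff_abs_le
        zero_le_power2 norm_ge_zero)
  moreover have "cmod a = cmod (cinner x y) / (norm y)\<^sup>2"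
    by (simp add: a_def norm_divide norm_power)
  ultimately show ?thesis using ny by (simp add: power2_eq_square field_simps)
qed simp

lemma bounded_linear_cinner_left: "bounded_linear (\<lambda>x::'a::complex_inner. cinner x y)"
proof (rule bounded_linear_intro[where K = "norm y"])
  show "cinner (x + z) y = cinner x y + cinner z y" for x z by (rule cinner_add_left)
  show "cinner (r *\<^sub>R x) y = r *\<^sub>R cinner x y" for r x
    by (simp add: cinner_scaleR_left scaleR_conv_of_real)
  show "norm (cinner x y) \<le> norm x * norm y" for x by (rule norm_cinner_le)
qed

lemma bounded_linear_scaleC_right: "bounded_linear (\<lambda>x::'a::complex_inner. a *\<^sub>C x)"
proof (rule bounded_linear_intro[where K = "cmod a"])
  show "a *\<^sub>C (x + z) = a *\<^sub>C x + a *\<^sub>C z" for x z by (rule scaleC_add_right)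
  show "a *\<^sub>C (r *\<^sub>R x) = r *\<^sub>R (a *\<^sub>C x)" for r x
    by (simp add: scaleR_scaleC scaleC_scaleC mult.commute)
  show "norm (a *\<^sub>C x) \<le> norm x * cmod a" for x by (simp add: norm_scaleC mult.commute)
qed

lemma bounded_linear_cinner_scaleC:
  "bounded_linear (\<lambda>x::'a::complex_inner. cinner x y *\<^sub>C (c::'b::complex_inner))"
proof (rule bounded_linear_intro[where K = "norm y * norm c"])
  show "cinner (x + z) y *\<^sub>C c = cinner x y *\<^sub>C c + cinner z y *\<^sub>C c" for x z
    by (simp add: cinner_add_left scaleC_add_left)
  show "cinner (r *\<^sub>R x) y *\<^sub>C c = r *\<^sub>R (cinner x y *\<^sub>C c)" for r x
    by (simp add: cinner_scaleR_left scaleR_scaleC[of r "cinner x y *\<^sub>C c"] scaleC_scaleC)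
  show "norm (cinner x y *\<^sub>C c) \<le> norm x * (norm y * norm c)" for x
    using mult_right_mono[OF norm_cinner_le[of x y] norm_ge_zero[of c]]
    by (simp add: norm_scaleC mult.assoc)
qed

lemma suminf_cinner_left:
  assumes "summable (f::nat \<Rightarrow> 'a::complex_inner)"
  shows "cinner (suminf f) y = (\<Sum>k. cinner (f k) y)"
  using bounded_linear.suminf[OF bounded_linear_cinner_left assms] by simp

lemma suminf_scaleC:
  assumes "summable (f::nat \<Rightarrow> 'a::complex_inner)"
  shows "a *\<^sub>C suminf f = (\<Sum>k. a *\<^sub>C f k)"
  using bounded_linear.suminf[OF bounded_linear_scaleC_right assms] by simp

lemma summable_scaleC:
  "summable (f::nat \<Rightarrow> 'a::complex_inner) \<Longrightarrow> summable (\<lambda>k. a *\<^sub>C f k)"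
  using bounded_linear.summable[OF bounded_linear_scaleC_right] .

section \<open>The coordinate space \<open>\<complex>\<^sup>n\<close>\<close>

definition cip :: "nat \<Rightarrow> (nat \<Rightarrow> complex) \<Rightarrow> (nat \<Rightarrow> complex) \<Rightarrow> complex" where
  "cip n x y = (\<Sum>k<n. x k * cnj (y k))"

lemma complex_of_real_cmod_square: "(complex_of_real (cmod z))\<^sup>2 = z * cnj z"
  by (metis complex_norm_square of_real_power)

lemma e_apply: "e j k = (if k = j then 1 else 0)"
  by (simp add: e_def)

lemma inj_e: "inj e"
  by (rule injI) (metis e_apply one_neq_zero)

lemma e_eq_iff: "e j = e l \<longleftrightarrow> j = l"
  using inj_e by (auto dest: injD)

lemma cnorm_square: "(cnorm n x)\<^sup>2 = (\<Sum>k<n. (cmod (x k))\<^sup>2)"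
  by (simp add: cnorm_def sum_nonneg)

lemma cnorm_nonneg: "cnorm n x \<ge> 0"
  by (simp add: cnorm_def sum_nonneg)

lemma cip_self: "cip n x x = complex_of_real ((cnorm n x)\<^sup>2)"
  by (simp add: cip_def cnorm_square complex_of_real_cmod_square)

lemma cip_commute: "cip n x y = cnj (cip n y x)"
  by (simp add: cip_def mult.commute)

lemma cip_e_right:
  assumes "k < n"
  shows "cip n x (e k) = x k"
proof -
  have "x j * cnj (e k j) = (if j = k then x k else 0)" for j by (simp add: e_apply)
  then show ?thesis using assms by (simp add: cip_def)
qed

lemma cip_e_left:
  assumes "k < n"
  shows "cip n (e k) x = cnj (x k)"
proof -
  have "e k j * cnj (x j) = (if j = k then cnj (x k) else 0)" for j by (simp add: e_apply)
  then show ?thesis using assms by (simp add: cip_def)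
qed

lemma cnorm_e:
  assumes "k < n"
  shows "cnorm n (e k) = 1"
proof -
  have "(cmod (e k j))\<^sup>2 = (if j = k then 1 else 0)" for j by (simp add: e_apply)
  then show ?thesis using assms by (simp add: cnorm_def)
qed

lemma cnorm_eq_0_iff: "cnorm n u = 0 \<longleftrightarrow> (\<forall>k<n. u k = 0)"
proof -
  have "cnorm n u = 0 \<longleftrightarrow> (\<Sum>k<n. (cmod (u k))\<^sup>2) = 0" by (simp add: cnorm_def sum_nonneg)
  also have "\<dots> \<longleftrightarrow> (\<forall>k<n. u k = 0)" by (subst sum_nonneg_eq_0_iff) auto
  finally show ?thesis .
qed

lemma cip_lincomb_left:
  "cip n (\<lambda>k. x k - (\<Sum>i\<in>I. c i * f i k)) z = cip n x z - (\<Sum>i\<in>I. c i * cip n (f i) z)"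
  by (simp add: cip_def algebra_simps sum_subtractf sum_distrib_left sum_distrib_right
      sum.swap[of _ I])

lemma cip_lincomb_right:
  "cip n z (\<lambda>k. x k - (\<Sum>i\<in>I. c i * f i k)) = cip n z x - (\<Sum>i\<in>I. cnj (c i) * cip n z (f i))"
  by (simp add: cip_def algebra_simps sum_subtractf sum_distrib_left sum_distrib_right
      sum.swap[of _ I])

lemma cip_div_left: "cip n (\<lambda>k. x k / a) y = cip n x y / a"
  by (simp add: cip_def sum_divide_distrib)

lemma cip_div_right: "cip n y (\<lambda>k. x k / complex_of_real a) = cip n y x / complex_of_real a"
  by (simp add: cip_def sum_divide_distrib)

lemma cmod_cip_le: "cmod (cip n x y) \<le> cnorm n x * cnorm n y"
proof -
  have "cmod (cip n x y) \<le> (\<Sum>k<n. cmod (x k) * cmod (y k))"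
    unfolding cip_def by (rule order_trans[OF norm_sum]) (simp add: norm_mult)
  also have "\<dots> \<le> L2_set (\<lambda>k. cmod (x k)) {..<n} * L2_set (\<lambda>k. cmod (y k)) {..<n}"
    using L2_set_mult_ineq[of "\<lambda>k. cmod (x k)" "\<lambda>k. cmod (y k)" "{..<n}"] by simp
  also have "\<dots> = cnorm n x * cnorm n y" by (simp add: L2_set_def cnorm_def)
  finally show ?thesis .
qed

lemma e_in_Cn: "l < n \<Longrightarrow> e l \<in> Cn n"
  by (simp add: Cn_def e_apply)

lemma zero_in_Cn: "(\<lambda>_. 0) \<in> Cn n"
  by (simp add: Cn_def)

lemma Cn_lincomb: "(\<And>i. i \<in> I \<Longrightarrow> a i \<in> Cn n) \<Longrightarrow> (\<lambda>j. \<Sum>i\<in>I. c i * a i j) \<in> Cn n"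
  by (simp add: Cn_def)

lemma Cn_diff: "x \<in> Cn n \<Longrightarrow> y \<in> Cn n \<Longrightarrow> (\<lambda>j. x j - y j) \<in> Cn n"
  by (simp add: Cn_def)

lemma Cn_add: "x \<in> Cn n \<Longrightarrow> y \<in> Cn n \<Longrightarrow> (\<lambda>j. x j + y j) \<in> Cn n"
  by (simp add: Cn_def)

lemma Cn_eqI:
  assumes "x \<in> Cn n" "y \<in> Cn n" "\<And>k. k < n \<Longrightarrow> x k = y k"
  shows "x = y"
proof
  fix k show "x k = y k"
    using assms by (cases "k < n") (auto simp: Cn_def)
qed

lemma Cn_eq_zeroI: "x \<in> Cn n \<Longrightarrow> cnorm n x = 0 \<Longrightarrow> x = (\<lambda>_. 0)"
  by (rule Cn_eqI[OF _ zero_in_Cn]) (auto simp: cnorm_eq_0_iff)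

lemma Cn_expand: "x \<in> Cn n \<Longrightarrow> x = (\<lambda>j. \<Sum>l<n. x l * e l j)"
  by (auto simp: fun_eq_iff Cn_def e_apply if_distrib cong: if_cong)

definition orthonormal :: "nat \<Rightarrow> (nat \<Rightarrow> complex) list \<Rightarrow> bool" where
  "orthonormal n Q \<longleftrightarrow>
     (\<forall>i<length Q. \<forall>j<length Q. cip n (Q!i) (Q!j) = (if i = j then 1 else 0))"

definition perp_proj :: "nat \<Rightarrow> (nat \<Rightarrow> complex) list \<Rightarrow> (nat \<Rightarrow> complex) \<Rightarrow> (nat \<Rightarrow> complex)" where
  "perp_proj n Q x = (\<lambda>k. x k - (\<Sum>i<length Q. cip n x (Q!i) * (Q!i) k))"

lemma orthonormal_Nil: "orthonormal n []"
  by (simp add: orthonormal_def)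

lemma cip_perp_proj_orthonormal:
  assumes "orthonormal n Q" "j < length Q"
  shows "cip n (perp_proj n Q x) (Q!j) = 0"
proof -
  have "(\<Sum>i<length Q. cip n x (Q!i) * cip n (Q!i) (Q!j))
      = (\<Sum>i<length Q. if i = j then cip n x (Q!j) else 0)"
    using assms by (intro sum.cong) (auto simp: orthonormal_def)
  then show ?thesis
    using assms(2) by (simp add: perp_proj_def cip_lincomb_left)
qed

lemma cip_perp_proj_commute: "cip n (perp_proj n Q x) y = cip n x (perp_proj n Q y)"
  unfolding perp_proj_def cip_lincomb_left cip_lincomb_right
  by (simp add: cip_commute[of n y "Q!_"] mult.commute)

lemma cnorm_perp_proj_square:
  assumes "orthonormal n Q"
  shows "(cnorm n (perp_proj n Q x))\<^sup>2 = (cnorm n x)\<^sup>2 - (\<Sum>i<length Q. (cmod (cip n x (Q!i)))\<^sup>2)"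
proof -
  let ?P = "perp_proj n Q x"
  have "cip n ?P ?P = cip n ?P x - (\<Sum>i<length Q. cnj (cip n x (Q!i)) * cip n ?P (Q!i))"
    by (subst (2) perp_proj_def, rule cip_lincomb_right)
  also have "\<dots> = cip n ?P x"
    using cip_perp_proj_orthonormal[OF assms] by simp
  also have "\<dots> = cip n x x - (\<Sum>i<length Q. cip n x (Q!i) * cip n (Q!i) x)"
    unfolding perp_proj_def by (rule cip_lincomb_left)
  also have "(\<Sum>i<length Q. cip n x (Q!i) * cip n (Q!i) x)
      = (\<Sum>i<length Q. complex_of_real ((cmod (cip n x (Q!i)))\<^sup>2))"
    by (intro sum.cong refl) (simp add: cip_commute[of n "Q!_" x] complex_of_real_cmod_square)
  finally have "complex_of_real ((cnorm n ?P)\<^sup>2)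
      = complex_of_real ((cnorm n x)\<^sup>2 - (\<Sum>i<length Q. (cmod (cip n x (Q!i)))\<^sup>2))"
    by (simp add: cip_self)
  then show ?thesis using of_real_eq_iff by blast
qed

lemma cnorm_perp_proj_le:
  "orthonormal n Q \<Longrightarrow> (cnorm n (perp_proj n Q x))\<^sup>2 \<le> (cnorm n x)\<^sup>2"
  by (simp add: cnorm_perp_proj_square sum_nonneg)

lemma Bessel_inequality_cip:
  "orthonormal n Q \<Longrightarrow> (\<Sum>i<length Q. (cmod (cip n x (Q!i)))\<^sup>2) \<le> (cnorm n x)\<^sup>2"
  using cnorm_perp_proj_square[of n Q x] by (metis diff_ge_0_iff_ge zero_le_power2)

lemma sum_cnorm_orthonormal:
  assumes "orthonormal n Q"
  shows "(\<Sum>k<n. \<Sum>i<length Q. (cmod (cip n (e k) (Q!i)))\<^sup>2) = real (length Q)"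
proof -
  have "(cnorm n (Q!i))\<^sup>2 = 1" if "i < length Q" for i
  proof -
    have "cip n (Q!i) (Q!i) = 1" using assms that by (simp add: orthonormal_def)
    then have "complex_of_real ((cnorm n (Q!i))\<^sup>2) = complex_of_real 1" by (simp add: cip_self)
    then show ?thesis using of_real_eq_iff by blast
  qed
  then have "(\<Sum>i<length Q. (cnorm n (Q!i))\<^sup>2) = real (length Q)" by simp
  then show ?thesis
    by (simp add: cnorm_square cip_e_left sum.swap[of _ "{..<n}"])
qed

lemma length_orthonormal_le:
  assumes "orthonormal n Q"
  shows "length Q \<le> n"
proof -
  have "real (length Q) = (\<Sum>k<n. \<Sum>i<length Q. (cmod (cip n (e k) (Q!i)))\<^sup>2)"
    by (rule sum_cnorm_orthonormal[OF assms, symmetric])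
  also have "\<dots> \<le> (\<Sum>k<n. (cnorm n (e k))\<^sup>2)"
    by (intro sum_mono Bessel_inequality_cip[OF assms])
  also have "\<dots> = real n" by (simp add: cnorm_e)
  finally show ?thesis by simp
qed

lemma trace_perp_proj:
  assumes "orthonormal n Q"
  shows "(\<Sum>k<n. (cnorm n (perp_proj n Q (e k)))\<^sup>2) = real n - real (length Q)"
  using sum_cnorm_orthonormal[OF assms]
  by (simp add: cnorm_perp_proj_square[OF assms] cnorm_e sum_subtractf)

definition gs_step :: "nat \<Rightarrow> (nat \<Rightarrow> complex) list \<Rightarrow> (nat \<Rightarrow> complex) \<Rightarrow> (nat \<Rightarrow> complex) list" where
  "gs_step n Q v = (if cnorm n (perp_proj n Q v) = 0 then Q
      else Q @ [(\<lambda>k. perp_proj n Q v k / complex_of_real (cnorm n (perp_proj n Q v)))])"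

lemma orthonormal_snoc:
  assumes "orthonormal n Q" "\<And>i. i < length Q \<Longrightarrow> cip n (Q!i) q = 0" "cip n q q = 1"
  shows "orthonormal n (Q @ [q])"
proof -
  have "cip n q (Q!i) = 0" if "i < length Q" for i
    using assms(2) that cip_commute[of n q "Q!i"] by simp
  then show ?thesis
    using assms unfolding orthonormal_def
    by (auto simp: nth_append less_Suc_eq)
qed

lemma orthonormal_gs_step:
  assumes "orthonormal n Q"
  shows "orthonormal n (gs_step n Q v)"
proof (cases "cnorm n (perp_proj n Q v) = 0")
  case False
  let ?u = "perp_proj n Q v" let ?c = "cnorm n (perp_proj n Q v)"
  have pos: "?c > 0" using False cnorm_nonneg[of n ?u] by simp
  have "cip n (Q!i) (\<lambda>k. ?u k / complex_of_real ?c) = 0" if "i < length Q" for i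
    using cip_perp_proj_orthonormal[OF assms that, of v] cip_commute[of n "Q!i" ?u]
    by (simp add: cip_div_right)
  moreover have "cip n (\<lambda>k. ?u k / complex_of_real ?c) (\<lambda>k. ?u k / complex_of_real ?c) = 1"
    using pos by (simp add: cip_div_right cip_div_left cip_self power2_eq_square)
  ultimately show ?thesis using False assms by (simp add: gs_step_def orthonormal_snoc)
qed (use assms in \<open>simp add: gs_step_def\<close>)

lemma cip_gs_step_eq_0:
  assumes "\<And>i. i < length Q \<Longrightarrow> cip n d (Q!i) = 0" "cip n d v = 0" "i < length (gs_step n Q v)"
  shows "cip n d (gs_step n Q v ! i) = 0"
proof -
  have "cip n d (perp_proj n Q v) = 0"
    unfolding perp_proj_def cip_lincomb_right using assms(1,2) by simp
  then show ?thesis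
    using assms by (auto simp: gs_step_def nth_append cip_div_right less_Suc_eq)
qed

lemma length_gs_step:
  "length (gs_step n Q v) = (if cnorm n (perp_proj n Q v) = 0 then length Q else Suc (length Q))"
  by (simp add: gs_step_def)

lemma perp_proj_eq_0_if_full:
  assumes "orthonormal n Q" "length Q = n" "k < n"
  shows "perp_proj n Q y k = 0"
proof (rule ccontr)
  assume "perp_proj n Q y k \<noteq> 0"
  then have "length (gs_step n Q y) = Suc n"
    using assms(2,3) cnorm_eq_0_iff by (auto simp: length_gs_step)
  then show False using length_orthonormal_le[OF orthonormal_gs_step[OF assms(1), of y]] by simp
qed

text \<open>With pointwise scaling, \<open>nat \<Rightarrow> complex\<close> is a \<open>vector_space\<close> in which \<open>Cn n\<close> is the
  span of \<open>e 0, \<dots>, e (n - 1)\<close>; the library's dimension theory then shows that injective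
  linear maps of \<open>Cn n\<close> are onto.\<close>

definition cscale :: "complex \<Rightarrow> (nat \<Rightarrow> complex) \<Rightarrow> (nat \<Rightarrow> complex)" where
  "cscale c x = (\<lambda>k. c * x k)"

interpretation cvec: vector_space cscale
  by unfold_locales (auto simp: cscale_def fun_eq_iff algebra_simps)

lemma sum_fun_apply: "(\<Sum>i\<in>I. f i) k = (\<Sum>i\<in>I. f i k :: complex)"
  by (induction I rule: infinite_finite_induct) auto

lemma sum_cscale_e: "(\<Sum>v\<in>e ` {..<n}. cscale (u v) v) = (\<lambda>k. if k < n then u (e k) else 0)"
proof
  fix k
  have "(\<Sum>v\<in>e ` {..<n}. cscale (u v) v) k = (\<Sum>l<n. u (e l) * e l k)"
    by (simp add: sum.reindex inj_on_subset[OF inj_e] sum_fun_apply cscale_def)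
  also have "\<dots> = (\<Sum>l<n. if l = k then u (e k) else 0)"
    by (intro sum.cong) (auto simp: e_apply)
  finally show "(\<Sum>v\<in>e ` {..<n}. cscale (u v) v) k = (if k < n then u (e k) else 0)"
    by simp
qed

lemma Cn_eq_span: "Cn n = cvec.span (e ` {..<n})"
proof -
  have "cvec.span (e ` {..<n}) = range (\<lambda>u. \<Sum>v\<in>e ` {..<n}. cscale (u v) v)"
    by (rule cvec.span_finite) simp
  also have "\<dots> = Cn n"
  proof (intro equalityI subsetI)
    fix x assume "x \<in> Cn n"
    then show "x \<in> range (\<lambda>u. \<Sum>v\<in>e ` {..<n}. cscale (u v) v)"
      unfolding sum_cscale_e
      by (intro range_eqI[where x = "\<lambda>v. \<Sum>j<n. x j * v j"])
         (auto simp: fun_eq_iff Cn_def e_apply if_distrib cong: if_cong)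
  qed (auto simp: sum_cscale_e Cn_def)
  finally show ?thesis ..
qed

lemma independent_e: "cvec.independent (e ` {..<n})"
  unfolding cvec.independent_explicit_module
proof (intro allI impI)
  fix t u v
  assume "finite t" and t: "t \<subseteq> e ` {..<n}" and sum0: "(\<Sum>v\<in>t. cscale (u v) v) = 0"
    and v: "v \<in> t"
  obtain l where l: "v = e l" using v t by auto
  have "(\<Sum>v\<in>t. cscale (u v) v) l = (\<Sum>v'\<in>t. if v' = v then u v else 0)"
    unfolding sum_fun_apply cscale_def
  proof (intro sum.cong refl)
    fix v' assume "v' \<in> t"
    then obtain j where "v' = e j" using t by auto
    then show "u v' * v' l = (if v' = v then u v else 0)"
      using l by (auto simp: e_apply e_eq_iff)
  qed
  then show "u v = 0" using sum0 v \<open>finite t\<close> by simp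
qed

lemma linear_inj_on_imp_bij_betw_Cn:
  assumes lin: "Vector_Spaces.linear cscale cscale T" and into: "T ` Cn n \<subseteq> Cn n"
    and inj: "inj_on T (Cn n)"
  shows "bij_betw T (Cn n) (Cn n)"
proof -
  interpret T: Vector_Spaces.linear cscale cscale T by (fact lin)
  let ?E = "e ` {..<n}"
  have E: "?E \<subseteq> Cn n" using e_in_Cn by blast
  have indep: "cvec.independent (T ` ?E)"
    by (rule T.independent_injective_image[OF independent_e])
       (simp add: inj Cn_eq_span[symmetric])
  have card: "card (T ` ?E) = n"
    using card_image[OF inj_on_subset[OF inj E]] by (simp add: card_image inj_on_subset[OF inj_e])
  have "y \<in> cvec.span (T ` ?E)" if y: "y \<in> Cn n" for y
  proof (rule ccontr)
    assume y_notin: "y \<notin> cvec.span (T ` ?E)"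
    have "y \<notin> T ` ?E" using y_notin cvec.span_base by metis
    then have "card (insert y (T ` ?E)) = Suc n" using card by simp
    moreover have "insert y (T ` ?E) \<subseteq> cvec.span ?E"
      using y into E by (auto simp: Cn_eq_span[symmetric])
    ultimately have "Suc n \<le> card ?E"
      using cvec.independent_span_bound[OF _ cvec.independent_insertI[OF y_notin indep]] by simp
    then show False by (simp add: card_image inj_on_subset[OF inj_e])
  qed
  then have "Cn n \<subseteq> T ` Cn n" by (simp add: subsetI T.span_image Cn_eq_span)
  then show ?thesis using into inj by (auto simp: bij_betw_def)
qed

definition cn_linear :: "nat \<Rightarrow> ((nat \<Rightarrow> complex) \<Rightarrow> (nat \<Rightarrow> complex)) \<Rightarrow> bool" where
  "cn_linear n T \<longleftrightarrow>
     (\<forall>x\<in>Cn n. T x \<in> Cn n) \<and> (\<forall>x\<in>Cn n. T x = (\<lambda>i. \<Sum>l<n. x l * T (e l) i))"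

lemma cn_linearI:
  assumes "\<And>x i. n \<le> i \<Longrightarrow> T x i = 0" "\<And>x. x \<in> Cn n \<Longrightarrow> T x = (\<lambda>i. \<Sum>l<n. x l * T (e l) i)"
  shows "cn_linear n T"
  using assms by (simp add: cn_linear_def Cn_def)

lemma cn_linear_into: "cn_linear n T \<Longrightarrow> x \<in> Cn n \<Longrightarrow> T x \<in> Cn n"
  unfolding cn_linear_def by blast

lemma cn_linear_zero: "cn_linear n T \<Longrightarrow> T (\<lambda>_. 0) = (\<lambda>_. 0)"
  using zero_in_Cn by (auto simp: cn_linear_def)

lemma cn_linear_lincomb:
  assumes "cn_linear n T" "finite I" "\<And>i. i \<in> I \<Longrightarrow> a i \<in> Cn n"
  shows "T (\<lambda>j. \<Sum>i\<in>I. c i * a i j) = (\<lambda>k. \<Sum>i\<in>I. c i * T (a i) k)"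
proof -
  have "(\<lambda>j. \<Sum>i\<in>I. c i * a i j) \<in> Cn n" using assms(3) by (rule Cn_lincomb)
  then have "T (\<lambda>j. \<Sum>i\<in>I. c i * a i j) = (\<lambda>k. \<Sum>l<n. (\<Sum>i\<in>I. c i * a i l) * T (e l) k)"
    using assms(1) by (simp add: cn_linear_def)
  also have "\<dots> = (\<lambda>k. \<Sum>i\<in>I. c i * (\<Sum>l<n. a i l * T (e l) k))"
    by (simp add: sum_distrib_left sum_distrib_right sum.swap[of _ I] mult.assoc)
  also have "\<dots> = (\<lambda>k. \<Sum>i\<in>I. c i * T (a i) k)"
    using assms(1,3) by (simp add: cn_linear_def)
  finally show ?thesis .
qed

lemma cn_linear_add:
  assumes "cn_linear n T" "x \<in> Cn n" "y \<in> Cn n"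
  shows "T (\<lambda>j. x j + y j) = (\<lambda>k. T x k + T y k)"
  using assms Cn_add[OF assms(2,3)] by (simp add: cn_linear_def algebra_simps sum.distrib)

lemma cn_linear_diff:
  assumes "cn_linear n T" "x \<in> Cn n" "y \<in> Cn n"
  shows "T (\<lambda>j. x j - y j) = (\<lambda>k. T x k - T y k)"
  using assms Cn_diff[OF assms(2,3)] by (simp add: cn_linear_def algebra_simps sum_subtractf)

lemma cn_linear_bij:
  assumes T: "cn_linear n T" and inj: "inj_on T (Cn n)"
  shows "bij_betw T (Cn n) (Cn n)"
proof -
  define T' where "T' x = (\<lambda>i. \<Sum>l<n. x l * T (e l) i)" for x
  have eq: "T' x = T x" if "x \<in> Cn n" for x
    using T that by (simp add: cn_linear_def T'_def)
  have "Vector_Spaces.linear cscale cscale T'"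
    by (simp add: Vector_Spaces.linear_iff cvec.vector_space_axioms T'_def cscale_def fun_eq_iff
        algebra_simps sum.distrib sum_distrib_left)
  moreover have "T' ` Cn n \<subseteq> Cn n" "inj_on T' (Cn n)"
    using eq cn_linear_into[OF T] inj_on_cong[of _ T' T] inj by auto
  ultimately have "bij_betw T' (Cn n) (Cn n)" by (rule linear_inj_on_imp_bij_betw_Cn)
  then show ?thesis using bij_betw_cong[of _ T' T] eq by blast
qed

lemma cn_linear_inv_into:
  assumes T: "cn_linear n T" and inj: "inj_on T (Cn n)"
  shows "cn_linear n (inv_into (Cn n) T)"
proof -
  have bij: "bij_betw T (Cn n) (Cn n)" by (rule cn_linear_bij[OF T inj])
  let ?S = "inv_into (Cn n) T"
  have S_into: "?S x \<in> Cn n" if "x \<in> Cn n" for x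
    using bij that by (metis bij_betw_def inv_into_into)
  have "?S z = (\<lambda>i. \<Sum>l<n. z l * ?S (e l) i)" if z: "z \<in> Cn n" for z
  proof -
    define x where "x = (\<lambda>i. \<Sum>l<n. z l * ?S (e l) i)"
    have x: "x \<in> Cn n" unfolding x_def using S_into e_in_Cn by (intro Cn_lincomb) auto
    have "T x = (\<lambda>k. \<Sum>l<n. z l * T (?S (e l)) k)"
      unfolding x_def by (rule cn_linear_lincomb[OF T finite_lessThan]) (use S_into e_in_Cn in auto)
    also have "\<dots> = z"
      using Cn_expand[OF z] e_in_Cn by (simp add: bij_betw_inv_into_right[OF bij])
    finally have "?S z = ?S (T x)" by simp
    then show ?thesis using inj x by (simp add: x_def inv_into_f_f)
  qed
  then show ?thesis using S_into by (simp add: cn_linear_def)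
qed

lemma cn_linear_inj_on_if_bounded_below:
  assumes T: "cn_linear n T" and c: "c > 0"
    and bound: "\<And>x. x \<in> Cn n \<Longrightarrow> c * cnorm n x \<le> cnorm n (T x)"
  shows "inj_on T (Cn n)"
proof (rule inj_onI)
  fix x y assume x: "x \<in> Cn n" and y: "y \<in> Cn n" and eq: "T x = T y"
  have d: "(\<lambda>j. x j - y j) \<in> Cn n" using x y by (rule Cn_diff)
  have "T (\<lambda>j. x j - y j) = (\<lambda>_. 0)" using eq by (simp add: cn_linear_diff[OF T x y])
  then have "c * cnorm n (\<lambda>j. x j - y j) \<le> 0" using bound[OF d] by (simp add: cnorm_def)
  then have "cnorm n (\<lambda>j. x j - y j) = 0"
    using c cnorm_nonneg[of n "\<lambda>j. x j - y j"] by (simp add: mult_le_0_iff)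
  then have "(\<lambda>j. x j - y j) = (\<lambda>_. 0)" by (rule Cn_eq_zeroI[OF d])
  then show "x = y" by (simp add: fun_eq_iff)
qed

lemma mat_norm_le:
  assumes "n \<ge> 1" "\<And>y. y \<in> Cn n \<Longrightarrow> cnorm n y = 1 \<Longrightarrow> cnorm n (T y) \<le> K"
  shows "mat_norm n T \<le> K"
  unfolding mat_norm_def
proof (rule cSup_least)
  show "(\<lambda>y. cnorm n (T y)) ` {y \<in> Cn n. cnorm n y = 1} \<noteq> {}"
    using assms(1) e_in_Cn[of 0 n] cnorm_e[of 0 n] by auto
qed (use assms(2) in blast)

lemma mat_norm_nonneg:
  assumes "n \<ge> 1" "\<And>y. y \<in> Cn n \<Longrightarrow> cnorm n y = 1 \<Longrightarrow> cnorm n (T y) \<le> K"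
  shows "0 \<le> mat_norm n T"
  unfolding mat_norm_def
proof (rule cSup_upper2)
  show "cnorm n (T (e 0)) \<in> (\<lambda>y. cnorm n (T y)) ` {y \<in> Cn n. cnorm n y = 1}"
    using assms(1) e_in_Cn[of 0 n] cnorm_e[of 0 n] by auto
  show "bdd_above ((\<lambda>y. cnorm n (T y)) ` {y \<in> Cn n. cnorm n y = 1})"
    using assms(2) by (intro bdd_aboveI[of _ K]) blast
qed (rule cnorm_nonneg)

lemma cnorm_inv_into_le:
  assumes "bij_betw T (Cn n) (Cn n)" "c > 0"
    and bound: "\<And>x. x \<in> Cn n \<Longrightarrow> c * cnorm n x \<le> cnorm n (T x)"
    and z: "z \<in> Cn n"
  shows "cnorm n (inv_into (Cn n) T z) \<le> cnorm n z / c"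
proof -
  let ?y = "inv_into (Cn n) T z"
  have "?y \<in> Cn n" "T ?y = z"
    using assms(1) z by (auto simp: bij_betw_def bij_betw_inv_into_right inv_into_into)
  then have "c * cnorm n ?y \<le> cnorm n z" using bound by metis
  then show ?thesis using \<open>c > 0\<close> by (simp add: field_simps)
qed

lemma cnorm_ge_if_coercive:
  assumes "c * (cnorm n x)\<^sup>2 \<le> Re (cip n y x)" "c \<ge> 0"
  shows "c * cnorm n x \<le> cnorm n y"
proof -
  have "c * (cnorm n x)\<^sup>2 \<le> cnorm n y * cnorm n x"
    using assms(1) complex_Re_le_cmod[of "cip n y x"] cmod_cip_le[of n y x] by linarith
  then have "(c * cnorm n x) * cnorm n x \<le> cnorm n y * cnorm n x"
    by (simp add: power2_eq_square mult.assoc)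
  then show ?thesis using cnorm_nonneg[of n x] assms(2) cnorm_nonneg[of n y]
    by (cases "cnorm n x = 0") (auto simp: mult_le_cancel_right)
qed

section \<open>Synthesis operators, frames and Riesz sequences\<close>

lemma cspan_sum:
  assumes "finite K" "f ` K \<subseteq> X"
  shows "(\<Sum>k\<in>K. c k *\<^sub>C (f k::'a::complex_inner)) \<in> cspan X"
proof -
  define d where "d v = (\<Sum>k\<in>{k\<in>K. f k = v}. c k)" for v
  have "(\<Sum>v\<in>f ` K. d v *\<^sub>C v) = (\<Sum>v\<in>f ` K. \<Sum>k\<in>{k\<in>K. f k = v}. c k *\<^sub>C f k)"
    by (auto simp: d_def scaleC_sum_left intro!: sum.cong)
  also have "\<dots> = (\<Sum>k\<in>K. c k *\<^sub>C f k)"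
    using sum.group[OF assms(1) finite_imageI[OF assms(1)], where g = f and h = "\<lambda>k. c k *\<^sub>C f k"]
    by simp
  finally show ?thesis
    unfolding cspan_def using assms by (intro CollectI exI[of _ "f ` K"] exI[of _ d]) auto
qed

lemma cspan_subset_clspan: "cspan X \<subseteq> clspan X"
  by (simp add: clspan_def closure_subset)

lemma in_cspan: "x \<in> X \<Longrightarrow> x \<in> cspan X"
  using cspan_sum[of "{x}" id X "\<lambda>_. 1"] by (simp add: scaleC_one)

definition synth_fin :: "(nat \<Rightarrow> 'a::complex_inner) \<Rightarrow> nat \<Rightarrow> (nat \<Rightarrow> complex) \<Rightarrow> 'a" where
  "synth_fin w n x = (\<Sum>l<n. x l *\<^sub>C w l)"

lemma synth_iota: "synth w (iota n x) = synth_fin w n x"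
proof -
  have "synth w (iota n x) = (\<Sum>k<n. iota n x k *\<^sub>C w k)"
    unfolding synth_def by (rule suminf_finite) (auto simp: iota_def)
  then show ?thesis by (simp add: synth_fin_def iota_def)
qed

lemma synth_e: "synth s (e j) = s j"
proof -
  have "synth s (e j) = (\<Sum>k\<in>{j}. e j k *\<^sub>C s k)"
    unfolding synth_def by (rule suminf_finite) (auto simp: e_apply)
  then show ?thesis by (simp add: e_apply scaleC_one)
qed

lemma synth_fin_e: "l < n \<Longrightarrow> synth_fin w n (e l) = w l"
  by (simp add: synth_fin_def e_apply if_distrib[of "\<lambda>c. c *\<^sub>C _"] scaleC_one cong: if_cong)

lemma cinner_synth_fin_left: "cinner (synth_fin w n x) h = (\<Sum>l<n. x l * cinner (w l) h)"
  by (simp add: synth_fin_def cinner_sum_left cinner_scaleC_left)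

lemma cinner_synth_fin_right: "cinner h (synth_fin w n x) = (\<Sum>l<n. cnj (x l) * cinner h (w l))"
  by (simp add: synth_fin_def cinner_sum_right cinner_scaleC_right)

lemma synth_fin_in_cspan: "w ` {..<n} \<subseteq> X \<Longrightarrow> synth_fin w n x \<in> cspan X"
  unfolding synth_fin_def by (rule cspan_sum) auto

lemma synth_fin_add: "synth_fin w n (\<lambda>j. x j + y j) = synth_fin w n x + synth_fin w n y"
  by (simp add: synth_fin_def scaleC_add_left sum.distrib)

lemma synth_fin_diff: "synth_fin w n (\<lambda>j. x j - y j) = synth_fin w n x - synth_fin w n y"
  by (simp add: synth_fin_def scaleC_diff_left sum_subtractf)

lemma synth_fin_lincomb:
  "synth_fin w n (\<lambda>j. \<Sum>i\<in>I. c i * a i j) = (\<Sum>i\<in>I. c i *\<^sub>C synth_fin w n (a i))"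
  by (simp add: synth_fin_def scaleC_sum_left scaleC_sum_right scaleC_scaleC sum.swap[of _ I])

lemma iota_in_l2: "iota n x \<in> l2"
proof -
  have "summable (\<lambda>k. (cmod (iota n x k))\<^sup>2)"
    by (rule summable_finite[of "{..<n}"]) (auto simp: iota_def)
  then show ?thesis by (simp add: l2_def)
qed

lemma l2norm_iota: "l2norm (iota n x) = cnorm n x"
proof -
  have "(\<Sum>k. (cmod (iota n x k))\<^sup>2) = (\<Sum>k<n. (cmod (iota n x k))\<^sup>2)"
    by (rule suminf_finite) (auto simp: iota_def)
  then show ?thesis by (simp add: l2norm_def cnorm_def iota_def)
qed

locale riesz_sequence =
  fixes w :: "nat \<Rightarrow> 'h::{complex_inner, complete_space}" and C D :: real and n :: nat
  assumes riesz: "is_riesz_basis_for_span w C D"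
begin

lemma C_pos: "C > 0" and C_le_D: "C \<le> D"
  using riesz by (auto simp: is_riesz_basis_for_span_def)

lemma riesz_synth_fin:
  "C * (cnorm n x)\<^sup>2 \<le> (norm (synth_fin w n x))\<^sup>2" "(norm (synth_fin w n x))\<^sup>2 \<le> D * (cnorm n x)\<^sup>2"
  using riesz iota_in_l2[of n x]
  by (auto simp: is_riesz_basis_for_span_def l2norm_iota synth_iota)

lemma norm_synth_fin_le: "norm (synth_fin w n x) \<le> sqrt D * cnorm n x"
  using real_sqrt_le_mono[OF riesz_synth_fin(2)[of x]] cnorm_nonneg[of n x]
  by (simp add: real_sqrt_mult)

end

locale frame_riesz = riesz_sequence w C D n
  for w :: "nat \<Rightarrow> 'h::{complex_inner, complete_space}" and C D :: real and n :: nat +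
  fixes s :: "nat \<Rightarrow> 'h" and A B :: real
  assumes frame: "is_frame_for_span s A B"
    and W_sub_S: "clspan (range w) \<subseteq> clspan (range s)"
begin

lemma A_pos: "A > 0" and A_le_B: "A \<le> B"
  using frame by (auto simp: is_frame_for_span_def)

lemma B_pos: "B > 0"
  using A_pos A_le_B by simp

lemma frame_bounds:
  assumes "h \<in> clspan (range s)"
  shows "summable (\<lambda>k. (cmod (cinner h (s k)))\<^sup>2)"
    "A * (norm h)\<^sup>2 \<le> (\<Sum>k. (cmod (cinner h (s k)))\<^sup>2)"
    "(\<Sum>k. (cmod (cinner h (s k)))\<^sup>2) \<le> B * (norm h)\<^sup>2"
  using frame assms by (auto simp: is_frame_for_span_def)

lemma synth_fin_in_S: "synth_fin w n x \<in> clspan (range s)"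
  using synth_fin_in_cspan[of w n "range w" x] cspan_subset_clspan W_sub_S by blast

lemma w_in_S: "w l \<in> clspan (range s)"
  using in_cspan[of "w l" "range w"] cspan_subset_clspan W_sub_S by blast

lemma summable_anal: "h \<in> clspan (range s) \<Longrightarrow> summable (\<lambda>k. (cmod (anal s h k))\<^sup>2)"
  using frame_bounds(1) by (simp add: anal_def)

text \<open>The upper frame bound makes \<open>s\<close> a Bessel sequence in \<open>\<S>\<close>; its finite sums stay in \<open>\<S>\<close>,
  where they can be tested against \<open>s\<close> itself.\<close>
lemma norm_sum_scaleC_s_square_le:
  assumes "finite K"
  shows "(norm (\<Sum>k\<in>K. z k *\<^sub>C s k))\<^sup>2 \<le> B * (\<Sum>k\<in>K. (cmod (z k))\<^sup>2)"
proof -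
  let ?g = "\<Sum>k\<in>K. z k *\<^sub>C s k"
  have gS: "?g \<in> clspan (range s)"
    using cspan_sum[OF assms, of s "range s" z] cspan_subset_clspan by blast
  have "(norm ?g)\<^sup>2 = cmod (cinner ?g ?g)" by (simp add: cinner_self_norm norm_power)
  also have "\<dots> = cmod (\<Sum>k\<in>K. z k * cinner (s k) ?g)"
    by (simp add: cinner_sum_left cinner_scaleC_left)
  also have "\<dots> \<le> (\<Sum>k\<in>K. cmod (z k) * cmod (cinner ?g (s k)))"
    by (rule order_trans[OF norm_sum]) (simp add: norm_mult cinner_commute[of "s _" ?g])
  also have "\<dots> \<le> L2_set (\<lambda>k. cmod (z k)) K * L2_set (\<lambda>k. cmod (cinner ?g (s k))) K"
    using L2_set_mult_ineq[of "\<lambda>k. cmod (z k)" "\<lambda>k. cmod (cinner ?g (s k))" K] by simp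
  also have "\<dots> \<le> L2_set (\<lambda>k. cmod (z k)) K * (sqrt B * norm ?g)"
  proof (rule mult_left_mono[OF _ L2_set_nonneg])
    have "(\<Sum>k\<in>K. (cmod (cinner ?g (s k)))\<^sup>2) \<le> (\<Sum>k. (cmod (cinner ?g (s k)))\<^sup>2)"
      by (rule sum_le_suminf[OF frame_bounds(1)[OF gS]]) (auto simp: assms)
    also have "\<dots> \<le> B * (norm ?g)\<^sup>2" by (rule frame_bounds(3)[OF gS])
    finally have "(\<Sum>k\<in>K. (cmod (cinner ?g (s k)))\<^sup>2) \<le> B * (norm ?g)\<^sup>2" .
    from real_sqrt_le_mono[OF this]
    show "L2_set (\<lambda>k. cmod (cinner ?g (s k))) K \<le> sqrt B * norm ?g"
      by (simp add: L2_set_def real_sqrt_mult)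
  qed
  finally have "norm ?g * norm ?g \<le> (L2_set (\<lambda>k. cmod (z k)) K * sqrt B) * norm ?g"
    by (simp add: power2_eq_square mult_ac)
  then have "norm ?g \<le> L2_set (\<lambda>k. cmod (z k)) K * sqrt B"
    using B_pos by (cases "norm ?g = 0") (auto simp: mult_le_cancel_right L2_set_nonneg)
  then have "(norm ?g)\<^sup>2 \<le> (L2_set (\<lambda>k. cmod (z k)) K * sqrt B)\<^sup>2"
    by (simp add: power_mono)
  also have "\<dots> = B * (\<Sum>k\<in>K. (cmod (z k))\<^sup>2)"
    using B_pos by (simp add: power_mult_distrib L2_set_def sum_nonneg)
  finally show ?thesis .
qed

lemma summable_synth:
  assumes z: "summable (\<lambda>k. (cmod (z k))\<^sup>2)"
  shows "summable (\<lambda>k. z k *\<^sub>C s k)"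
proof -
  let ?P = "\<lambda>N. \<Sum>k<N. z k *\<^sub>C s k"
  have "Cauchy ?P"
  proof (rule CauchyI)
    fix \<epsilon> :: real assume \<epsilon>: "\<epsilon> > 0"
    then have "\<epsilon>\<^sup>2 / B > 0" using B_pos by simp
    then obtain N where N: "\<And>m n. m \<ge> N \<Longrightarrow> norm (\<Sum>k\<in>{m..<n}. (cmod (z k))\<^sup>2) < \<epsilon>\<^sup>2 / B"
      using z unfolding summable_Cauchy by blast
    have close: "norm (?P a - ?P b) < \<epsilon>" if "N \<le> b" "b \<le> a" for a b
    proof -
      have "?P a - ?P b = (\<Sum>k\<in>{b..<a}. z k *\<^sub>C s k)"
        using that by (simp add: sum_diff_nat_ivl[of 0, symmetric] atLeast0LessThan)
      then have "(norm (?P a - ?P b))\<^sup>2 \<le> B * (\<Sum>k\<in>{b..<a}. (cmod (z k))\<^sup>2)"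
        using norm_sum_scaleC_s_square_le[of "{b..<a}" z] by simp
      also have "\<dots> < B * (\<epsilon>\<^sup>2 / B)"
        using N[OF that(1), of a] B_pos by (intro mult_strict_left_mono) (auto simp: sum_nonneg)
      also have "\<dots> = \<epsilon>\<^sup>2" using B_pos by simp
      finally show ?thesis using \<epsilon> by (simp add: power_less_imp_less_base)
    qed
    have "norm (?P a - ?P b) < \<epsilon>" if "N \<le> a" "N \<le> b" for a b
      using close[of b a] close[of a b] that by (cases "b \<le> a") (auto simp: norm_minus_commute)
    then show "\<exists>M. \<forall>m\<ge>M. \<forall>n\<ge>M. norm (?P m - ?P n) < \<epsilon>" by blast
  qed
  then show ?thesis by (simp add: summable_iff_convergent Cauchy_convergent)
qed

lemma norm_synth_le:
  assumes z: "summable (\<lambda>k. (cmod (z k))\<^sup>2)"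
  shows "norm (synth s z) \<le> sqrt B * sqrt (\<Sum>k. (cmod (z k))\<^sup>2)"
proof -
  have "(\<lambda>N. \<Sum>k<N. z k *\<^sub>C s k) \<longlonglongrightarrow> synth s z"
    using summable_synth[OF z] unfolding synth_def by (simp add: summable_LIMSEQ)
  then have "(\<lambda>N. (norm (\<Sum>k<N. z k *\<^sub>C s k))\<^sup>2) \<longlonglongrightarrow> (norm (synth s z))\<^sup>2"
    by (intro tendsto_intros)
  moreover have "(norm (\<Sum>k<N. z k *\<^sub>C s k))\<^sup>2 \<le> B * (\<Sum>k. (cmod (z k))\<^sup>2)" for N
  proof -
    have "(norm (\<Sum>k<N. z k *\<^sub>C s k))\<^sup>2 \<le> B * (\<Sum>k<N. (cmod (z k))\<^sup>2)"
      by (rule norm_sum_scaleC_s_square_le) simp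
    also have "\<dots> \<le> B * (\<Sum>k. (cmod (z k))\<^sup>2)"
      using B_pos by (intro mult_left_mono sum_le_suminf[OF z]) auto
    finally show ?thesis .
  qed
  ultimately have "(norm (synth s z))\<^sup>2 \<le> B * (\<Sum>k. (cmod (z k))\<^sup>2)"
    by (intro LIMSEQ_le_const2) auto
  from real_sqrt_le_mono[OF this] show ?thesis by (simp add: real_sqrt_mult)
qed

lemma cinner_synth:
  "summable (\<lambda>k. (cmod (z k))\<^sup>2) \<Longrightarrow> cinner (synth s z) h = (\<Sum>k. z k * cinner (s k) h)"
  unfolding synth_def using suminf_cinner_left[OF summable_synth]
  by (simp add: cinner_scaleC_left)

lemma norm_synth_anal_le:
  assumes h: "h \<in> clspan (range s)"
  shows "norm (synth s (anal s h)) \<le> B * norm h"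
proof -
  have "sqrt (\<Sum>k. (cmod (anal s h k))\<^sup>2) \<le> sqrt B * norm h"
    using real_sqrt_le_mono[OF frame_bounds(3)[OF h]] B_pos
    by (simp add: anal_def real_sqrt_mult)
  then have "sqrt B * sqrt (\<Sum>k. (cmod (anal s h k))\<^sup>2) \<le> sqrt B * (sqrt B * norm h)"
    by (rule mult_left_mono) (use B_pos in simp)
  then show ?thesis
    using norm_synth_le[OF summable_anal[OF h]] B_pos by (simp add: mult.assoc[symmetric])
qed

end

section \<open>The matrix \<open>\<Sigma>\<close>\<close>

context frame_riesz
begin

lemma Sigma_apply:
  "Sigma s w n x = (\<lambda>i. if i < n then cinner (synth s (anal s (synth_fin w n x))) (w i) else 0)"
  by (simp add: Sigma_def Uop_def Uadj_def iota_adj_def synth_iota anal_def[of w])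

lemma cip_Sigma:
  "cip n (Sigma s w n x) y = cinner (synth s (anal s (synth_fin w n x))) (synth_fin w n y)"
  by (simp add: Sigma_apply cip_def cinner_synth_fin_right mult.commute)

lemma cip_Sigma_self:
  "cip n (Sigma s w n x) x = complex_of_real (\<Sum>k. (cmod (cinner (synth_fin w n x) (s k)))\<^sup>2)"
proof -
  let ?h = "synth_fin w n x"
  have "cip n (Sigma s w n x) x = (\<Sum>k. anal s ?h k * cinner (s k) ?h)"
    by (simp add: cip_Sigma cinner_synth[OF summable_anal[OF synth_fin_in_S]])
  also have "\<dots> = (\<Sum>k. complex_of_real ((cmod (cinner ?h (s k)))\<^sup>2))"
    by (simp add: anal_def cinner_commute[of "s _" ?h] complex_of_real_cmod_square)
  also have "\<dots> = complex_of_real (\<Sum>k. (cmod (cinner ?h (s k)))\<^sup>2)"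
    by (rule suminf_of_real[OF frame_bounds(1)[OF synth_fin_in_S], symmetric])
  finally show ?thesis .
qed

lemma Sigma_coercive: "A * C * (cnorm n x)\<^sup>2 \<le> Re (cip n (Sigma s w n x) x)"
proof -
  have "A * C * (cnorm n x)\<^sup>2 \<le> A * (norm (synth_fin w n x))\<^sup>2"
    using riesz_synth_fin(1)[of x] A_pos by (simp add: mult.assoc)
  also have "\<dots> \<le> (\<Sum>k. (cmod (cinner (synth_fin w n x) (s k)))\<^sup>2)"
    by (rule frame_bounds(2)[OF synth_fin_in_S])
  finally show ?thesis by (simp add: cip_Sigma_self)
qed

lemma cmod_cip_Sigma_le: "cmod (cip n (Sigma s w n x) y) \<le> B * D * cnorm n x * cnorm n y"
proof -
  have "cmod (cip n (Sigma s w n x) y)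
      \<le> norm (synth s (anal s (synth_fin w n x))) * norm (synth_fin w n y)"
    unfolding cip_Sigma by (rule norm_cinner_le)
  also have "\<dots> \<le> (B * (sqrt D * cnorm n x)) * (sqrt D * cnorm n y)"
  proof (rule mult_mono)
    show "norm (synth s (anal s (synth_fin w n x))) \<le> B * (sqrt D * cnorm n x)"
      using norm_synth_anal_le[OF synth_fin_in_S] norm_synth_fin_le[of x] B_pos
      by (meson mult_left_mono order_trans less_imp_le)
  qed (use B_pos C_pos C_le_D in \<open>simp_all add: norm_synth_fin_le cnorm_nonneg\<close>)
  also have "\<dots> = B * D * cnorm n x * cnorm n y"
    using C_pos C_le_D by (simp add: mult_ac)
  finally show ?thesis .
qed

lemma cnorm_Sigma_le: "cnorm n (Sigma s w n x) \<le> B * D * cnorm n x"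
proof -
  let ?v = "Sigma s w n x"
  have "(cnorm n ?v)\<^sup>2 = cmod (cip n ?v ?v)" by (simp add: cip_self norm_power)
  also have "\<dots> \<le> B * D * cnorm n x * cnorm n ?v" by (rule cmod_cip_Sigma_le)
  finally have "cnorm n ?v * cnorm n ?v \<le> (B * D * cnorm n x) * cnorm n ?v"
    by (simp add: power2_eq_square)
  then show ?thesis using cnorm_nonneg[of n ?v] B_pos C_pos C_le_D cnorm_nonneg[of n x]
    by (cases "cnorm n ?v = 0") (auto simp: mult_le_cancel_right)
qed

lemma cnorm_Sigma_ge: "A * C * cnorm n x \<le> cnorm n (Sigma s w n x)"
  using cnorm_ge_if_coercive[OF Sigma_coercive] A_pos C_pos by simp

lemma synth_anal_synth_fin:
  "synth s (anal s (synth_fin w n x)) = (\<Sum>l<n. x l *\<^sub>C synth s (anal s (w l)))"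
proof -
  have sl: "summable (\<lambda>k. (cmod (anal s (w l) k))\<^sup>2)" for l
    by (rule summable_anal[OF w_in_S])
  have "synth s (anal s (synth_fin w n x)) = (\<Sum>k. \<Sum>l<n. x l *\<^sub>C (anal s (w l) k *\<^sub>C s k))"
    unfolding synth_def
    by (simp add: anal_def cinner_synth_fin_left scaleC_sum_left scaleC_scaleC)
  also have "\<dots> = (\<Sum>l<n. \<Sum>k. x l *\<^sub>C (anal s (w l) k *\<^sub>C s k))"
    by (rule suminf_sum) (intro summable_scaleC summable_synth[OF sl])
  also have "\<dots> = (\<Sum>l<n. x l *\<^sub>C synth s (anal s (w l)))"
    unfolding synth_def by (intro sum.cong refl suminf_scaleC[symmetric] summable_synth[OF sl])
  finally show ?thesis .
qed

lemma cn_linear_Sigma: "cn_linear n (Sigma s w n)"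
  by (rule cn_linearI)
     (simp_all add: Sigma_apply synth_anal_synth_fin synth_fin_e cinner_sum_left
       cinner_scaleC_left fun_eq_iff)

lemma bij_betw_Sigma: "bij_betw (Sigma s w n) (Cn n) (Cn n)"
proof (rule cn_linear_bij[OF cn_linear_Sigma])
  show "inj_on (Sigma s w n) (Cn n)"
    by (rule cn_linear_inj_on_if_bounded_below[OF cn_linear_Sigma, of "A * C"])
       (use A_pos C_pos cnorm_Sigma_ge in auto)
qed

lemma cnorm_inv_Sigma_le:
  "z \<in> Cn n \<Longrightarrow> cnorm n (inv_into (Cn n) (Sigma s w n) z) \<le> cnorm n z / (A * C)"
  by (rule cnorm_inv_into_le[OF bij_betw_Sigma]) (use A_pos C_pos cnorm_Sigma_ge in auto)

lemma mat_norm_Sigma_le: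
  assumes "n \<ge> 1"
  shows "mat_norm n (Sigma s w n) \<le> B * D"
proof (rule mat_norm_le[OF assms])
  show "cnorm n (Sigma s w n y) \<le> B * D" if "cnorm n y = 1" for y
    using cnorm_Sigma_le[of y] that by simp
qed

lemma cnorm_inv_Sigma_unit_le:
  "z \<in> Cn n \<Longrightarrow> cnorm n z = 1 \<Longrightarrow> cnorm n (inv_into (Cn n) (Sigma s w n) z) \<le> 1 / (A * C)"
  using cnorm_inv_Sigma_le[of z] by simp

lemma mat_norm_inv_Sigma_le:
  "n \<ge> 1 \<Longrightarrow> mat_norm n (inv_into (Cn n) (Sigma s w n)) \<le> 1 / (A * C)"
  using mat_norm_le cnorm_inv_Sigma_unit_le by blast

lemma condition_number_Sigma_le:
  assumes "n \<ge> 1"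
  shows "mat_norm n (Sigma s w n) * mat_norm n (inv_into (Cn n) (Sigma s w n)) \<le> (B * D) / (A * C)"
proof -
  have "0 \<le> mat_norm n (inv_into (Cn n) (Sigma s w n))"
    using mat_norm_nonneg[OF assms] cnorm_inv_Sigma_unit_le by blast
  then have "mat_norm n (Sigma s w n) * mat_norm n (inv_into (Cn n) (Sigma s w n))
      \<le> (B * D) * (1 / (A * C))"
    using assms mat_norm_Sigma_le mat_norm_inv_Sigma_le B_pos C_pos C_le_D
    by (intro mult_mono) auto
  then show ?thesis by simp
qed

end

section \<open>The orthogonal projection onto \<open>\<W>\<^sub>n\<^sup>\<bottom>\<close>\<close>

lemma orth_comp_diff: "x \<in> orth_comp X \<Longrightarrow> y \<in> orth_comp X \<Longrightarrow> x - y \<in> orth_comp X"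
  by (simp add: orth_comp_def cinner_diff_left)

lemma orth_comp_add: "x \<in> orth_comp X \<Longrightarrow> y \<in> orth_comp X \<Longrightarrow> x + y \<in> orth_comp X"
  by (simp add: orth_comp_def cinner_add_left)

lemma orth_comp_scaleR: "x \<in> orth_comp X \<Longrightarrow> r *\<^sub>R x \<in> orth_comp X"
  by (simp add: orth_comp_def cinner_scaleR_left)

lemma orth_comp_zero: "0 \<in> orth_comp X"
  by (simp add: orth_comp_def)

lemma orth_proj_orth_comp_eqI:
  fixes X :: "'a::complex_inner set"
  assumes "y \<in> orth_comp X" "x - y \<in> orth_comp (orth_comp X)"
  shows "orth_proj (orth_comp X) x = y"
  unfolding orth_proj_def
proof (rule the_equality)
  fix y' assume y': "y' \<in> orth_comp X \<and> x - y' \<in> orth_comp (orth_comp X)"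
  have "y' - y \<in> orth_comp X" using y' assms(1) by (simp add: orth_comp_diff)
  moreover have "y' - y \<in> orth_comp (orth_comp X)"
    using orth_comp_diff[OF assms(2), of "x - y'"] y' by (simp add: algebra_simps)
  ultimately have "cinner (y' - y) (y' - y) = 0" by (simp add: orth_comp_def)
  then show "y' = y" by (simp add: cinner_self_norm)
qed (use assms in simp)

context riesz_sequence
begin

definition gram :: "(nat \<Rightarrow> complex) \<Rightarrow> (nat \<Rightarrow> complex)" where
  "gram x = (\<lambda>i. if i < n then cinner (synth_fin w n x) (w i) else 0)"

lemma cn_linear_gram: "cn_linear n gram"
  by (rule cn_linearI) (simp_all add: gram_def cinner_synth_fin_left synth_fin_e fun_eq_iff)

lemma cnorm_gram_ge: "C * cnorm n x \<le> cnorm n (gram x)"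
proof (rule cnorm_ge_if_coercive)
  have "cip n (gram x) x = cinner (synth_fin w n x) (synth_fin w n x)"
    by (simp add: gram_def cip_def cinner_synth_fin_right mult.commute)
  then show "C * (cnorm n x)\<^sup>2 \<le> Re (cip n (gram x) x)"
    using riesz_synth_fin(1)[of x] by (simp add: Re_cinner_self)
qed (use C_pos in simp)

lemma bij_betw_gram: "bij_betw gram (Cn n) (Cn n)"
  using cn_linear_bij[OF cn_linear_gram] cn_linear_inj_on_if_bounded_below[OF cn_linear_gram C_pos]
    cnorm_gram_ge
  by blast

definition proj_coeffs :: "'h \<Rightarrow> (nat \<Rightarrow> complex)" where
  "proj_coeffs h = inv_into (Cn n) gram (\<lambda>i. if i < n then cinner h (w i) else 0)"

lemma proj_coeffs_in_Cn: "proj_coeffs h \<in> Cn n"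
proof -
  have "(\<lambda>i. if i < n then cinner h (w i) else 0) \<in> gram ` Cn n"
    using bij_betw_gram by (simp add: bij_betw_def Cn_def)
  then show ?thesis unfolding proj_coeffs_def by (rule inv_into_into)
qed

lemma cinner_synth_fin_proj_coeffs:
  assumes "i < n"
  shows "cinner (synth_fin w n (proj_coeffs h)) (w i) = cinner h (w i)"
proof -
  have "(\<lambda>i. if i < n then cinner h (w i) else 0) \<in> Cn n" by (simp add: Cn_def)
  then have "gram (proj_coeffs h) = (\<lambda>i. if i < n then cinner h (w i) else 0)"
    unfolding proj_coeffs_def by (rule bij_betw_inv_into_right[OF bij_betw_gram])
  from fun_cong[OF this, of i] show ?thesis using assms by (simp add: gram_def)
qed

abbreviation Wn_perp :: "'h set" where
  "Wn_perp \<equiv> orth_comp (cspan (w ` {..<n}))"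

lemma in_Wn_perpI:
  assumes "\<And>i. i < n \<Longrightarrow> cinner y (w i) = 0"
  shows "y \<in> Wn_perp"
  unfolding orth_comp_def
proof (intro CollectI ballI)
  fix z assume "z \<in> cspan (w ` {..<n})"
  then obtain F c where F: "finite F" "F \<subseteq> w ` {..<n}" "z = (\<Sum>v\<in>F. c v *\<^sub>C v)"
    unfolding cspan_def by blast
  have "cinner y z = (\<Sum>v\<in>F. cnj (c v) * cinner y v)"
    by (simp add: F(3) cinner_sum_right cinner_scaleC_right)
  also have "\<dots> = 0" using F(2) assms by (intro sum.neutral) auto
  finally show "cinner y z = 0" .
qed

lemma synth_fin_in_orth_comp_Wn_perp: "synth_fin w n x \<in> orth_comp Wn_perp"
proof -
  have "cinner (w l) y = 0" if "y \<in> Wn_perp" "l < n" for y l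
    using that in_cspan[of "w l" "w ` {..<n}"] cinner_commute[of "w l" y]
    by (simp add: orth_comp_def)
  then show ?thesis by (simp add: orth_comp_def cinner_synth_fin_left)
qed

lemma Pperp_eq: "Pperp w n h = h - synth_fin w n (proj_coeffs h)"
  unfolding Pperp_def
proof (rule orth_proj_orth_comp_eqI)
  show "h - synth_fin w n (proj_coeffs h) \<in> Wn_perp"
    by (rule in_Wn_perpI) (simp add: cinner_diff_left cinner_synth_fin_proj_coeffs)
qed (simp add: synth_fin_in_orth_comp_Wn_perp)

lemma cinner_Pperp_w: "i < n \<Longrightarrow> cinner (Pperp w n h) (w i) = 0"
  by (simp add: Pperp_eq cinner_diff_left cinner_synth_fin_proj_coeffs)

lemma Pperp_in_Wn_perp: "Pperp w n h \<in> Wn_perp"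
  by (rule in_Wn_perpI) (rule cinner_Pperp_w)

lemma diff_Pperp_in_orth_comp: "h - Pperp w n h \<in> orth_comp Wn_perp"
  by (simp add: Pperp_eq synth_fin_in_orth_comp_Wn_perp)

lemma Pperp_idem: "Pperp w n (Pperp w n h) = Pperp w n h"
  unfolding Pperp_def
  by (rule orth_proj_orth_comp_eqI)
     (use Pperp_in_Wn_perp[unfolded Pperp_def] orth_comp_zero in auto)

lemma Pperp_add: "Pperp w n (x + y) = Pperp w n x + Pperp w n y"
  unfolding Pperp_def
proof (rule orth_proj_orth_comp_eqI)
  show "orth_proj Wn_perp x + orth_proj Wn_perp y \<in> Wn_perp"
    by (intro orth_comp_add Pperp_in_Wn_perp[unfolded Pperp_def])
  have "(x - Pperp w n x) + (y - Pperp w n y) \<in> orth_comp Wn_perp"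
    by (intro orth_comp_add diff_Pperp_in_orth_comp)
  then show "x + y - (orth_proj Wn_perp x + orth_proj Wn_perp y) \<in> orth_comp Wn_perp"
    by (simp add: Pperp_def algebra_simps)
qed

lemma Pperp_scaleR: "Pperp w n (r *\<^sub>R x) = r *\<^sub>R Pperp w n x"
  unfolding Pperp_def
proof (rule orth_proj_orth_comp_eqI)
  show "r *\<^sub>R orth_proj Wn_perp x \<in> Wn_perp"
    by (intro orth_comp_scaleR Pperp_in_Wn_perp[unfolded Pperp_def])
  have "r *\<^sub>R (x - Pperp w n x) \<in> orth_comp Wn_perp"
    by (intro orth_comp_scaleR diff_Pperp_in_orth_comp)
  then show "r *\<^sub>R x - r *\<^sub>R orth_proj Wn_perp x \<in> orth_comp Wn_perp"
    by (simp add: Pperp_def algebra_simps)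
qed

lemma norm_Pperp_le: "norm (Pperp w n h) \<le> norm h"
proof -
  have "cinner (Pperp w n h) (synth_fin w n (proj_coeffs h)) = 0"
    by (simp add: cinner_synth_fin_right cinner_Pperp_w)
  from norm_add_Pythagorean_cinner[OF this]
  have "(norm h)\<^sup>2 = (norm (Pperp w n h))\<^sup>2 + (norm (synth_fin w n (proj_coeffs h)))\<^sup>2"
    by (simp add: Pperp_eq)
  then have "(norm (Pperp w n h))\<^sup>2 \<le> (norm h)\<^sup>2" by simp
  then show ?thesis by (simp add: power2_le_iff_abs_le)
qed

lemma bounded_linear_Pperp: "bounded_linear (Pperp w n)"
  by (rule bounded_linear_intro[where K = 1]) (simp_all add: Pperp_add Pperp_scaleR norm_Pperp_le)

end

section \<open>The sampled matrix \<open>\<Sigma>\<^sub>\<Omega>\<close> and weighted least squares\<close>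

text \<open>Like the weights in \<open>wls_obj\<close>, it
  vanishes on samples of probability \<open>0\<close>, since \<open>x / 0 = 0\<close>.\<close>
definition sample_weight :: "nat pmf \<Rightarrow> nat \<Rightarrow> (nat \<Rightarrow> nat) \<Rightarrow> nat \<Rightarrow> complex" where
  "sample_weight p m om t = complex_of_real (1 / (real m * pmf p (om t)))"

text \<open>\<open>\<iota>\<^sub>n\<^sup>*U\<^sup>*Q\<^sub>\<Omega>S\<^sup>*g\<close>: the right-hand side of the normal equations of the weighted least-squares
  problem for \<open>g\<close>.\<close>
definition normal_rhs :: "(nat \<Rightarrow> 'a::complex_inner) \<Rightarrow> (nat \<Rightarrow> 'a) \<Rightarrow> nat \<Rightarrow> nat pmf \<Rightarrow> nat
    \<Rightarrow> (nat \<Rightarrow> nat) \<Rightarrow> 'a \<Rightarrow> (nat \<Rightarrow> complex)" where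
  "normal_rhs s w n p m om g = iota_adj n (Uadj s w (Qop p m om (anal s g)))"

lemma synth_Qop:
  "synth s (Qop p m om z) = (\<Sum>t<m. (sample_weight p m om t * z (om t)) *\<^sub>C s (om t))"
proof -
  let ?a = "\<lambda>t. (sample_weight p m om t * z (om t)) *\<^sub>C s (om t)"
  have Qop_term: "Qop p m om z k *\<^sub>C s k = (\<Sum>t<m. if om t = k then ?a t else 0)" for k
  proof -
    have "Qop p m om z k = (\<Sum>t<m. if om t = k then sample_weight p m om t * z (om t) else 0)"
      by (simp add: Qop_def sample_weight_def sum_distrib_left if_distrib[of "\<lambda>c. _ * c"]
          cong: if_cong)
    then show ?thesis by (simp add: scaleC_sum_left if_distrib[of "\<lambda>c. c *\<^sub>C _"] cong: if_cong)
  qed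
  have "synth s (Qop p m om z) = (\<Sum>k\<in>om ` {..<m}. Qop p m om z k *\<^sub>C s k)"
    unfolding synth_def by (rule suminf_finite) (auto simp: Qop_term intro!: sum.neutral)
  also have "\<dots> = (\<Sum>k\<in>om ` {..<m}. \<Sum>t<m. if om t = k then ?a t else 0)"
    by (simp add: Qop_term)
  also have "\<dots> = (\<Sum>t<m. \<Sum>k\<in>om ` {..<m}. if om t = k then ?a t else 0)"
    by (rule sum.swap)
  also have "\<dots> = (\<Sum>t<m. ?a t)"
    by (intro sum.cong refl) (simp add: sum.delta)
  finally show ?thesis .
qed

lemma normal_rhs_apply:
  "normal_rhs s w n p m om g = (\<lambda>i. if i < n then
      (\<Sum>t<m. sample_weight p m om t * cinner g (s (om t)) * cinner (s (om t)) (w i)) else 0)"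
  by (simp add: normal_rhs_def Uadj_def iota_adj_def anal_def synth_Qop cinner_sum_left
      cinner_scaleC_left)

lemma Sigma_hat_eq: "Sigma_hat s w n p m om x = normal_rhs s w n p m om (synth_fin w n x)"
  by (simp add: Sigma_hat_def normal_rhs_def Uop_def synth_iota)

lemma Gamma_hat_eq: "Gamma_hat s w n p m om h = normal_rhs s w n p m om (Pperp w n h)"
  by (simp add: Gamma_hat_def normal_rhs_def)

lemma normal_rhs_add:
  "normal_rhs s w n p m om (f + g)
     = (\<lambda>i. normal_rhs s w n p m om f i + normal_rhs s w n p m om g i)"
  by (simp add: normal_rhs_apply cinner_add_left algebra_simps sum.distrib fun_eq_iff)

lemma cip_normal_rhs:
  "cip n (normal_rhs s w n p m om g) y
     = (\<Sum>t<m. sample_weight p m om t * cinner g (s (om t))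
          * cnj (cinner (synth_fin w n y) (s (om t))))"
proof -
  have "cip n (normal_rhs s w n p m om g) y = (\<Sum>i<n. \<Sum>t<m. sample_weight p m om t
      * cinner g (s (om t)) * (cnj (y i) * cinner (s (om t)) (w i)))"
    by (simp add: normal_rhs_apply cip_def sum_distrib_left sum_distrib_right mult_ac)
  also have "\<dots> = (\<Sum>t<m. sample_weight p m om t * cinner g (s (om t))
      * (\<Sum>i<n. cnj (y i) * cinner (s (om t)) (w i)))"
    by (subst sum.swap) (simp add: sum_distrib_left)
  also have "\<dots> = (\<Sum>t<m. sample_weight p m om t * cinner g (s (om t))
      * cnj (cinner (synth_fin w n y) (s (om t))))"
    by (simp add: cinner_synth_fin_right[symmetric] cinner_commute[of "s _" "synth_fin w n y"])
  finally show ?thesis .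
qed

lemma cip_Sigma_hat_self:
  "cip n (Sigma_hat s w n p m om x) x = complex_of_real
     (\<Sum>t<m. 1 / (real m * pmf p (om t)) * (cmod (cinner (synth_fin w n x) (s (om t))))\<^sup>2)"
  by (simp add: Sigma_hat_eq cip_normal_rhs sample_weight_def mult.assoc
      complex_of_real_cmod_square)

lemma cn_linear_Sigma_hat: "cn_linear n (Sigma_hat s w n p m om)"
proof (rule cn_linearI)
  let ?c = "\<lambda>t l i. sample_weight p m om t * cinner (w l) (s (om t)) * cinner (s (om t)) (w i)"
  fix x
  show "Sigma_hat s w n p m om x = (\<lambda>i. \<Sum>l<n. x l * Sigma_hat s w n p m om (e l) i)"
  proof
    fix i
    show "Sigma_hat s w n p m om x i = (\<Sum>l<n. x l * Sigma_hat s w n p m om (e l) i)"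
    proof (cases "i < n")
      case True
      have "Sigma_hat s w n p m om x i = (\<Sum>t<m. \<Sum>l<n. x l * ?c t l i)"
        using True by (simp add: Sigma_hat_eq normal_rhs_apply cinner_synth_fin_left
            sum_distrib_right sum_distrib_left mult_ac)
      also have "\<dots> = (\<Sum>l<n. x l * (\<Sum>t<m. ?c t l i))"
        by (subst sum.swap) (simp add: sum_distrib_left)
      also have "\<dots> = (\<Sum>l<n. x l * Sigma_hat s w n p m om (e l) i)"
        using True by (intro sum.cong refl) (simp add: Sigma_hat_eq normal_rhs_apply synth_fin_e)
      finally show ?thesis .
    qed (simp add: Sigma_hat_eq normal_rhs_apply)
  qed
qed (simp add: Sigma_hat_eq normal_rhs_apply)

lemma vvec_apply: "vvec s w n j = (\<lambda>i. if i < n then cinner (s j) (w i) else 0)"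
  by (simp add: vvec_def Uadj_def iota_adj_def anal_def synth_e)

lemma cip_vvec: "cip n x (vvec s w n j) = cinner (synth_fin w n x) (s j)"
  by (simp add: vvec_apply cip_def cinner_synth_fin_left cinner_commute[of "s j" "w _"])

lemma cmod_add_square: "(cmod (a + d))\<^sup>2 = (cmod a)\<^sup>2 + (cmod d)\<^sup>2 + 2 * Re (a * cnj d)"
  unfolding cmod_power2 by (simp add: power2_eq_square algebra_simps)

lemma wls_obj_eq_if_normal:
  assumes normal: "Sigma_hat s w n p m om x = normal_rhs s w n p m om f"
  shows "wls_obj s w n p m om f y = wls_obj s w n p m om f x
    + (\<Sum>t<m. (1 / pmf p (om t)) * (cmod (cinner (synth_fin w n (\<lambda>j. y j - x j)) (s (om t))))\<^sup>2)"
proof -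
  define a where "a t = cinner (synth_fin w n x) (s (om t)) - cinner f (s (om t))" for t
  define d where "d t = cinner (synth_fin w n (\<lambda>j. y j - x j)) (s (om t))" for t
  have "(\<Sum>t<m. sample_weight p m om t * a t * cnj (d t))
      = (\<Sum>t<m. sample_weight p m om t * cinner (synth_fin w n x) (s (om t)) * cnj (d t))
        - (\<Sum>t<m. sample_weight p m om t * cinner f (s (om t)) * cnj (d t))"
    unfolding a_def by (simp add: right_diff_distrib left_diff_distrib sum_subtractf)
  also have "\<dots> = cip n (Sigma_hat s w n p m om x) (\<lambda>j. y j - x j)
        - cip n (normal_rhs s w n p m om f) (\<lambda>j. y j - x j)"
    by (simp only: Sigma_hat_eq cip_normal_rhs d_def)
  finally have "(\<Sum>t<m. sample_weight p m om t * a t * cnj (d t)) = 0" by (simp add: normal)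
  moreover have "Re (\<Sum>t<m. sample_weight p m om t * a t * cnj (d t))
      = (\<Sum>t<m. (1 / (real m * pmf p (om t))) * Re (a t * cnj (d t)))"
    by (simp add: sample_weight_def Re_sum mult.assoc)
  ultimately have "real m * (\<Sum>t<m. (1 / (real m * pmf p (om t))) * Re (a t * cnj (d t))) = 0"
    by simp
  then have cross: "(\<Sum>t<m. (1 / pmf p (om t)) * Re (a t * cnj (d t))) = 0"
    by (cases "m = 0") (simp_all add: sum_distrib_left)
  have "wls_obj s w n p m om f y = (\<Sum>t<m. (1 / pmf p (om t)) * (cmod (a t + d t))\<^sup>2)"
    unfolding wls_obj_def synth_iota
    by (intro sum.cong refl) (simp add: a_def d_def synth_fin_diff cinner_diff_left)
  also have "\<dots> = (\<Sum>t<m. (1 / pmf p (om t)) * (cmod (a t))\<^sup>2)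
      + (\<Sum>t<m. (1 / pmf p (om t)) * (cmod (d t))\<^sup>2)
      + 2 * (\<Sum>t<m. (1 / pmf p (om t)) * Re (a t * cnj (d t)))"
    by (simp add: cmod_add_square algebra_simps sum.distrib sum_distrib_left)
  finally show ?thesis
    using cross by (simp add: wls_obj_def synth_iota a_def d_def)
qed

lemma is_wls_solution_if_normal:
  assumes "x \<in> Cn n" "Sigma_hat s w n p m om x = normal_rhs s w n p m om f"
  shows "is_wls_solution s w n p m om f x"
proof -
  have "wls_obj s w n p m om f x \<le> wls_obj s w n p m om f y" for y
    unfolding wls_obj_eq_if_normal[OF assms(2), of y] by (simp add: sum_nonneg)
  then show ?thesis using assms(1) by (simp add: is_wls_solution_def)
qed

locale sampling = frame_riesz w C D n s A B
  for w s :: "nat \<Rightarrow> 'h::{complex_inner, complete_space}" and A B C D :: real and n :: nat +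
  fixes p :: "nat pmf"
  assumes pmf_pos_if_vvec: "\<And>j. vvec s w n j \<noteq> (\<lambda>_. 0) \<Longrightarrow> pmf p j > 0"
begin

lemma cip_vvec_eq_0_if_weighted_sum_eq_0:
  fixes om :: "nat \<Rightarrow> nat"
  assumes "c > 0" "t < m"
    and sum0: "(\<Sum>t<m. 1 / (c * pmf p (om t)) * (cmod (cinner (synth_fin w n x) (s (om t))))\<^sup>2) = 0"
  shows "cip n x (vvec s w n (om t)) = 0"
proof (cases "pmf p (om t) > 0")
  case True
  let ?f = "\<lambda>t. 1 / (c * pmf p (om t)) * (cmod (cinner (synth_fin w n x) (s (om t))))\<^sup>2"
  have nonneg: "0 \<le> ?f t'" if "t' \<in> {..<m}" for t'
    using \<open>c > 0\<close> by (intro mult_nonneg_nonneg) (simp_all add: pmf_nonneg)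
  have "?f t = 0"
    by (rule sum_nonneg_0[of "{..<m}" ?f]) (use nonneg sum0 assms(2) in simp_all)
  then show ?thesis using True \<open>c > 0\<close> by (simp add: cip_vvec)
next
  case False
  then have "vvec s w n (om t) = (\<lambda>_. 0)" using pmf_pos_if_vvec by blast
  then show ?thesis by (simp add: cip_def)
qed

lemma Sigma_hat_eq_0_iff:
  "Sigma_hat s w n p m om x = (\<lambda>_. 0) \<longleftrightarrow> (\<forall>t<m. cip n x (vvec s w n (om t)) = 0)"
proof
  assume "Sigma_hat s w n p m om x = (\<lambda>_. 0)"
  then have "cip n (Sigma_hat s w n p m om x) x = 0" by (simp add: cip_def)
  then have "(\<Sum>t<m. 1 / (real m * pmf p (om t)) * (cmod (cinner (synth_fin w n x) (s (om t))))\<^sup>2)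
      = 0"
    by (simp only: cip_Sigma_hat_self of_real_eq_0_iff)
  then show "\<forall>t<m. cip n x (vvec s w n (om t)) = 0"
    using cip_vvec_eq_0_if_weighted_sum_eq_0[of "real m"] by auto
next
  assume "\<forall>t<m. cip n x (vvec s w n (om t)) = 0"
  then show "Sigma_hat s w n p m om x = (\<lambda>_. 0)"
    by (simp add: Sigma_hat_eq normal_rhs_apply cip_vvec fun_eq_iff)
qed

lemma inj_on_Sigma_hat:
  assumes span: "\<And>d. d \<in> Cn n \<Longrightarrow> \<forall>t<m. cip n d (vvec s w n (om t)) = 0 \<Longrightarrow> d = (\<lambda>_. 0)"
  shows "inj_on (Sigma_hat s w n p m om) (Cn n)"
proof (rule inj_onI)
  fix x y assume x: "x \<in> Cn n" and y: "y \<in> Cn n"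
    and eq: "Sigma_hat s w n p m om x = Sigma_hat s w n p m om y"
  have "Sigma_hat s w n p m om (\<lambda>j. x j - y j) = (\<lambda>_. 0)"
    using eq by (simp add: cn_linear_diff[OF cn_linear_Sigma_hat x y])
  then have "(\<lambda>j. x j - y j) = (\<lambda>_. 0)"
    using span Cn_diff[OF x y] by (simp add: Sigma_hat_eq_0_iff)
  then show "x = y" by (simp add: fun_eq_iff)
qed

lemma wls_solution_unique:
  assumes inj: "inj_on (Sigma_hat s w n p m om) (Cn n)" and x: "x \<in> Cn n"
    and normal: "Sigma_hat s w n p m om x = normal_rhs s w n p m om f"
    and y: "is_wls_solution s w n p m om f y"
  shows "y = x"
proof -
  let ?d = "\<lambda>j. y j - x j"
  have y_in: "y \<in> Cn n" and "wls_obj s w n p m om f y \<le> wls_obj s w n p m om f x"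
    using y x by (auto simp: is_wls_solution_def)
  then have "(\<Sum>t<m. (1 / pmf p (om t)) * (cmod (cinner (synth_fin w n ?d) (s (om t))))\<^sup>2) \<le> 0"
    unfolding wls_obj_eq_if_normal[OF normal, of y] by simp
  then have sum0: "(\<Sum>t<m. (1 / pmf p (om t)) * (cmod (cinner (synth_fin w n ?d) (s (om t))))\<^sup>2) = 0"
    by (simp add: antisym sum_nonneg)
  have "cip n ?d (vvec s w n (om t)) = 0" if "t < m" for t
    by (rule cip_vvec_eq_0_if_weighted_sum_eq_0[of 1, OF _ that]) (use sum0 in simp_all)
  then have "Sigma_hat s w n p m om ?d = (\<lambda>_. 0)" by (simp add: Sigma_hat_eq_0_iff)
  then have "Sigma_hat s w n p m om ?d = Sigma_hat s w n p m om (\<lambda>_. 0)"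
    by (simp add: cn_linear_zero[OF cn_linear_Sigma_hat])
  then have "?d = (\<lambda>_. 0)" using inj_onD[OF inj _ Cn_diff[OF y_in x] zero_in_Cn] by blast
  then show "y = x" by (simp add: fun_eq_iff)
qed

definition Sigma_hat_inv :: "nat \<Rightarrow> (nat \<Rightarrow> nat) \<Rightarrow> (nat \<Rightarrow> complex) \<Rightarrow> (nat \<Rightarrow> complex)" where
  "Sigma_hat_inv m om = inv_into (Cn n) (Sigma_hat s w n p m om)"

text \<open>\<open>W\<iota>\<^sub>n\<Sigma>\<^sub>\<Omega>\<^sup>-\<^sup>1\<Gamma>\<^sub>\<Omega>\<close>, whose norm is \<open>K\<^sub>n\<^sub>,\<^sub>\<Omega>\<close>.\<close>
definition wls_error_op :: "nat \<Rightarrow> (nat \<Rightarrow> nat) \<Rightarrow> 'h \<Rightarrow> 'h" where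
  "wls_error_op m om h = synth w (iota n (Sigma_hat_inv m om (Gamma_hat s w n p m om h)))"

definition wls_sol :: "nat \<Rightarrow> (nat \<Rightarrow> nat) \<Rightarrow> 'h \<Rightarrow> (nat \<Rightarrow> complex)" where
  "wls_sol m om f = (\<lambda>j. proj_coeffs f j + Sigma_hat_inv m om (Gamma_hat s w n p m om f) j)"

lemma Gamma_hat_in_Cn: "Gamma_hat s w n p m om h \<in> Cn n"
  by (simp add: Gamma_hat_eq normal_rhs_apply Cn_def)

context
  fixes m om
  assumes bij: "bij_betw (Sigma_hat s w n p m om) (Cn n) (Cn n)"
begin

lemma Sigma_hat_inv_in_Cn: "z \<in> Cn n \<Longrightarrow> Sigma_hat_inv m om z \<in> Cn n"
  using bij by (metis Sigma_hat_inv_def bij_betw_def inv_into_into)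

lemma wls_sol_in_Cn: "wls_sol m om f \<in> Cn n"
  unfolding wls_sol_def
  by (intro Cn_add proj_coeffs_in_Cn Sigma_hat_inv_in_Cn Gamma_hat_in_Cn)

lemma Sigma_hat_wls_sol: "Sigma_hat s w n p m om (wls_sol m om f) = normal_rhs s w n p m om f"
proof -
  let ?z = "Sigma_hat_inv m om (Gamma_hat s w n p m om f)"
  have z: "Sigma_hat s w n p m om ?z = normal_rhs s w n p m om (Pperp w n f)"
    using bij_betw_inv_into_right[OF bij Gamma_hat_in_Cn] by (simp add: Sigma_hat_inv_def
        Gamma_hat_eq)
  have "Sigma_hat s w n p m om (wls_sol m om f)
      = (\<lambda>i. Sigma_hat s w n p m om (proj_coeffs f) i + Sigma_hat s w n p m om ?z i)"
    unfolding wls_sol_def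
    by (rule cn_linear_add[OF cn_linear_Sigma_hat proj_coeffs_in_Cn
          Sigma_hat_inv_in_Cn[OF Gamma_hat_in_Cn]])
  also have "\<dots> = (\<lambda>i. normal_rhs s w n p m om (synth_fin w n (proj_coeffs f)) i
      + normal_rhs s w n p m om (Pperp w n f) i)"
    unfolding z by (simp only: Sigma_hat_eq)
  also have "\<dots> = normal_rhs s w n p m om (synth_fin w n (proj_coeffs f) + Pperp w n f)"
    by (simp add: normal_rhs_add)
  finally show ?thesis by (simp add: Pperp_eq)
qed

lemma bounded_linear_wls_error_op: "bounded_linear (wls_error_op m om)"
proof -
  let ?u = "\<lambda>i t. (sample_weight p m om t * cinner (s (om t)) (w i))
      *\<^sub>C synth_fin w n (Sigma_hat_inv m om (e i))"
  have inv_linear: "cn_linear n (Sigma_hat_inv m om)"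
    unfolding Sigma_hat_inv_def
    by (rule cn_linear_inv_into[OF cn_linear_Sigma_hat bij_betw_imp_inj_on[OF bij]])
  have "wls_error_op m om h = (\<Sum>i<n. \<Sum>t<m. cinner (Pperp w n h) (s (om t)) *\<^sub>C ?u i t)" for h
  proof -
    have "Sigma_hat_inv m om (Gamma_hat s w n p m om h)
        = (\<lambda>j. \<Sum>i<n. Gamma_hat s w n p m om h i * Sigma_hat_inv m om (e i) j)"
      using inv_linear Gamma_hat_in_Cn by (simp add: cn_linear_def)
    then have "wls_error_op m om h
        = (\<Sum>i<n. Gamma_hat s w n p m om h i *\<^sub>C synth_fin w n (Sigma_hat_inv m om (e i)))"
      by (simp add: wls_error_op_def synth_iota synth_fin_lincomb)
    then show ?thesis
      by (simp add: Gamma_hat_eq normal_rhs_apply scaleC_sum_left scaleC_scaleC mult_ac)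
  qed
  then have "wls_error_op m om = (\<lambda>h. \<Sum>i<n. \<Sum>t<m. cinner (Pperp w n h) (s (om t)) *\<^sub>C ?u i t)"
    by (rule ext)
  moreover have "bounded_linear (\<lambda>h. \<Sum>i<n. \<Sum>t<m. cinner (Pperp w n h) (s (om t)) *\<^sub>C ?u i t)"
    by (intro bounded_linear_sum
        bounded_linear_compose[OF bounded_linear_cinner_scaleC bounded_linear_Pperp])
  ultimately show ?thesis by simp
qed

text \<open>With \<open>P = P\<^sub>\<W>\<^sub>\<^sub>n\<^sub>\<bottom>\<close> and \<open>x\<close> the solution, \<open>f - W\<iota>\<^sub>nx = P f - W\<iota>\<^sub>n\<Sigma>\<^sub>\<Omega>\<^sup>-\<^sup>1\<Gamma>\<^sub>\<Omega>(P f)\<close>, and the two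
  terms are orthogonal.\<close>
lemma norm_wls_error_le:
  "norm (f - synth w (iota n (wls_sol m om f)))
     \<le> norm (Pperp w n f) * sqrt (1 + (onorm (wls_error_op m om))\<^sup>2)"
proof -
  let ?P = "Pperp w n f"
  have op_P: "wls_error_op m om ?P = wls_error_op m om f"
    by (simp add: wls_error_op_def Gamma_hat_eq Pperp_idem)
  have "synth w (iota n (wls_sol m om f)) = synth_fin w n (proj_coeffs f) + wls_error_op m om f"
    by (simp add: wls_sol_def synth_iota synth_fin_add wls_error_op_def)
  then have "f - synth w (iota n (wls_sol m om f)) = ?P - wls_error_op m om ?P"
    unfolding op_P by (simp add: Pperp_eq)
  moreover have "cinner ?P (wls_error_op m om ?P) = 0"
    by (simp add: wls_error_op_def synth_iota cinner_synth_fin_right cinner_Pperp_w)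
  ultimately have "(norm (f - synth w (iota n (wls_sol m om f))))\<^sup>2
      = (norm ?P)\<^sup>2 + (norm (wls_error_op m om ?P))\<^sup>2"
    by (simp add: norm_diff_Pythagorean_cinner)
  also have "\<dots> \<le> (norm ?P)\<^sup>2 + (onorm (wls_error_op m om) * norm ?P)\<^sup>2"
    using onorm[OF bounded_linear_wls_error_op, of ?P] by (intro add_left_mono power_mono) auto
  also have "\<dots> = (norm ?P * sqrt (1 + (onorm (wls_error_op m om))\<^sup>2))\<^sup>2"
    by (simp add: power_mult_distrib algebra_simps)
  finally show ?thesis by (rule power2_le_imp_le) simp
qed

lemma wls_solution_exists_unique:
  "\<exists>x. is_wls_solution s w n p m om f x \<and> (\<forall>y. is_wls_solution s w n p m om f y \<longrightarrow> y = x)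
     \<and> norm (f - synth w (iota n x)) \<le> norm (Pperp w n f) * sqrt (1 + (onorm (wls_error_op m om))\<^sup>2)"
  using is_wls_solution_if_normal[OF wls_sol_in_Cn Sigma_hat_wls_sol]
    wls_solution_unique[OF bij_betw_imp_inj_on[OF bij] wls_sol_in_Cn Sigma_hat_wls_sol]
    norm_wls_error_le
  by blast

end

end

section \<open>Probability that the sampled vectors span \<open>\<complex>\<^sup>n\<close>\<close>

lemma power_one_minus_le_exp: "0 \<le> a \<Longrightarrow> a \<le> 1 \<Longrightarrow> (1 - a) ^ m \<le> exp (- (real m * a))"
  using power_mono[OF exp_ge_add_one_self[of "- a"], of m]
  by (simp add: exp_of_nat_mult[symmetric])

lemma geometric_tail_le:
  assumes "0 \<le> a" "a \<le> 1" "n \<ge> 1" "0 < \<delta>" and m: "ln (2 * real n / \<delta>) \<le> real m * a"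
  shows "real n * (1 - a) ^ m \<le> \<delta>"
proof -
  have "(1 - a) ^ m \<le> exp (- ln (2 * real n / \<delta>))"
    using power_one_minus_le_exp[OF assms(1,2)] m by (meson exp_le_cancel_iff neg_le_iff_le
        order_trans)
  also have "\<dots> = \<delta> / (2 * real n)"
    using assms(3,4) by (simp add: exp_minus)
  finally have "real n * (1 - a) ^ m \<le> real n * (\<delta> / (2 * real n))"
    by (rule mult_left_mono) simp
  also have "\<dots> \<le> \<delta>" using assms(3,4) by simp
  finally show ?thesis .
qed

lemma sample_Suc:
  "sample p (Suc t) = bind_pmf (sample p t) (\<lambda>f. bind_pmf p (\<lambda>y. return_pmf (f(t := y))))"
proof -
  have "sample p (Suc t) = Pi_pmf (insert t {..<t}) 0 (\<lambda>_. p)"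
    by (simp add: sample_def lessThan_Suc)
  also have "\<dots> = do {y \<leftarrow> p; f \<leftarrow> Pi_pmf {..<t} 0 (\<lambda>_. p); return_pmf (f(t := y))}"
    by (rule Pi_pmf_insert') auto
  also have "\<dots> = bind_pmf (sample p t) (\<lambda>f. bind_pmf p (\<lambda>y. return_pmf (f(t := y))))"
    by (subst bind_commute_pmf) (simp add: sample_def)
  finally show ?thesis .
qed

locale sampling_bounded = sampling w s A B C D n p
  for w s :: "nat \<Rightarrow> 'h::{complex_inner, complete_space}" and A B C D :: real and n :: nat
    and p :: "nat pmf" +
  assumes n_pos: "n \<ge> 1"
    and R_bdd: "bdd_above ((\<lambda>j. (cnorm n (vvec s w n j))\<^sup>2 / pmf p j) ` set_pmf p)"
begin

abbreviation R :: real where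
  "R \<equiv> Rconst s w n p"

lemma cnorm_vvec_square_le: "(cnorm n (vvec s w n j))\<^sup>2 \<le> R * pmf p j"
proof (cases "j \<in> set_pmf p")
  case True
  then have "pmf p j > 0" by (simp add: set_pmf_iff pmf_nonneg order_le_neq_trans)
  moreover have "(cnorm n (vvec s w n j))\<^sup>2 / pmf p j \<le> R"
    unfolding Rconst_def by (rule cSUP_upper[OF True R_bdd])
  ultimately show ?thesis by (simp add: divide_le_eq)
next
  case False
  then have "pmf p j = 0" by (simp add: set_pmf_iff)
  then have "vvec s w n j = (\<lambda>_. 0)" using pmf_pos_if_vvec by force
  then show ?thesis by (simp add: cnorm_def \<open>pmf p j = 0\<close>)
qed

lemma R_nonneg: "R \<ge> 0"
proof -
  obtain j where j: "j \<in> set_pmf p" using set_pmf_not_empty[of p] by blast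
  have "0 \<le> (cnorm n (vvec s w n j))\<^sup>2 / pmf p j" by (simp add: pmf_nonneg)
  also have "\<dots> \<le> R" unfolding Rconst_def by (rule cSUP_upper[OF j R_bdd])
  finally show ?thesis .
qed

lemma frame_lower_vvec:
  "summable (\<lambda>j. (cmod (cip n y (vvec s w n j)))\<^sup>2)"
  "A * C * (cnorm n y)\<^sup>2 \<le> (\<Sum>j. (cmod (cip n y (vvec s w n j)))\<^sup>2)"
proof -
  show "summable (\<lambda>j. (cmod (cip n y (vvec s w n j)))\<^sup>2)"
    using frame_bounds(1)[OF synth_fin_in_S] by (simp add: cip_vvec)
  have "A * C * (cnorm n y)\<^sup>2 \<le> A * (norm (synth_fin w n y))\<^sup>2"
    using riesz_synth_fin(1)[of y] A_pos by (simp add: mult.assoc)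
  also have "\<dots> \<le> (\<Sum>j. (cmod (cip n y (vvec s w n j)))\<^sup>2)"
    using frame_bounds(2)[OF synth_fin_in_S] by (simp add: cip_vvec)
  finally show "A * C * (cnorm n y)\<^sup>2 \<le> (\<Sum>j. (cmod (cip n y (vvec s w n j)))\<^sup>2)" .
qed

lemma cnorm_perp_proj_square_eq:
  "(cnorm n (perp_proj n Q x))\<^sup>2 = (\<Sum>k<n. (cmod (cip n (perp_proj n Q (e k)) x))\<^sup>2)"
proof -
  have "(cnorm n (perp_proj n Q x))\<^sup>2 = (\<Sum>k<n. (cmod (cip n (perp_proj n Q x) (e k)))\<^sup>2)"
    by (simp add: cnorm_square cip_e_right)
  also have "\<dots> = (\<Sum>k<n. (cmod (cip n (perp_proj n Q (e k)) x))\<^sup>2)"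
    by (intro sum.cong refl) (simp add: cip_perp_proj_commute cip_commute[of n x])
  finally show ?thesis .
qed

text \<open>Summing the lower frame bound over the columns of \<open>perp_proj n Q\<close> bounds the energy of the
  projected \<open>v\<^sub>j\<close> from below by \<open>AC\<close> times the trace.\<close>
lemma sum_cnorm_perp_proj_vvec_ge:
  assumes Q: "orthonormal n Q"
  shows "summable (\<lambda>j. (cnorm n (perp_proj n Q (vvec s w n j)))\<^sup>2)"
    "A * C * (real n - real (length Q)) \<le> (\<Sum>j. (cnorm n (perp_proj n Q (vvec s w n j)))\<^sup>2)"
proof -
  let ?c = "\<lambda>k j. (cmod (cip n (perp_proj n Q (e k)) (vvec s w n j)))\<^sup>2"
  have sk: "summable (?c k)" for k by (rule frame_lower_vvec(1))
  show "summable (\<lambda>j. (cnorm n (perp_proj n Q (vvec s w n j)))\<^sup>2)"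
    unfolding cnorm_perp_proj_square_eq by (rule summable_sum) (rule sk)
  have "A * C * (real n - real (length Q)) = (\<Sum>k<n. A * C * (cnorm n (perp_proj n Q (e k)))\<^sup>2)"
    by (simp add: trace_perp_proj[OF Q] sum_distrib_left[symmetric])
  also have "\<dots> \<le> (\<Sum>k<n. \<Sum>j. ?c k j)"
    by (intro sum_mono frame_lower_vvec(2))
  also have "\<dots> = (\<Sum>j. \<Sum>k<n. ?c k j)"
    by (rule suminf_sum[symmetric]) (rule sk)
  also have "\<dots> = (\<Sum>j. (cnorm n (perp_proj n Q (vvec s w n j)))\<^sup>2)"
    by (simp add: cnorm_perp_proj_square_eq)
  finally show "A * C * (real n - real (length Q))
      \<le> (\<Sum>j. (cnorm n (perp_proj n Q (vvec s w n j)))\<^sup>2)" .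
qed

lemma sum_cnorm_perp_proj_vvec_le:
  assumes Q: "orthonormal n Q"
  shows "(\<Sum>j. (cnorm n (perp_proj n Q (vvec s w n j)))\<^sup>2)
    \<le> R * measure_pmf.prob p {j. cnorm n (perp_proj n Q (vvec s w n j)) \<noteq> 0}"
proof (rule suminf_le_const[OF sum_cnorm_perp_proj_vvec_ge(1)[OF Q]])
  fix N
  let ?E = "{j. cnorm n (perp_proj n Q (vvec s w n j)) \<noteq> 0}"
  have "(cnorm n (perp_proj n Q (vvec s w n j)))\<^sup>2 \<le> (if j \<in> ?E then R * pmf p j else 0)" for j
    using cnorm_perp_proj_le[OF Q, of "vvec s w n j"] cnorm_vvec_square_le[of j] by auto
  then have "(\<Sum>j<N. (cnorm n (perp_proj n Q (vvec s w n j)))\<^sup>2)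
      \<le> (\<Sum>j<N. if j \<in> ?E then R * pmf p j else 0)"
    by (rule sum_mono)
  also have "\<dots> = R * measure_pmf.prob p ({..<N} \<inter> ?E)"
    by (simp add: sum.If_cases sum_distrib_left Int_def measure_measure_pmf_finite)
  also have "\<dots> \<le> R * measure_pmf.prob p ?E"
    using R_nonneg by (intro mult_left_mono measure_pmf.finite_measure_mono) auto
  finally show "(\<Sum>j<N. (cnorm n (perp_proj n Q (vvec s w n j)))\<^sup>2) \<le> R * measure_pmf.prob p ?E" .
qed

lemma codim_le_prob_enlarge:
  "orthonormal n Q \<Longrightarrow> A * C * (real n - real (length Q))
    \<le> R * measure_pmf.prob p {j. cnorm n (perp_proj n Q (vvec s w n j)) \<noteq> 0}"
  using sum_cnorm_perp_proj_vvec_ge(2) sum_cnorm_perp_proj_vvec_le by (meson order_trans)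

lemma AC_le_R: "A * C \<le> R"
proof -
  have "A * C * real n \<le> R * measure_pmf.prob p {j. cnorm n (perp_proj n [] (vvec s w n j)) \<noteq> 0}"
    using codim_le_prob_enlarge[OF orthonormal_Nil] by simp
  also have "\<dots> \<le> R" using R_nonneg by (simp add: mult_left_le)
  finally show ?thesis using n_pos A_pos C_pos
    by (smt (verit) mult_le_cancel_left1 mult_pos_pos of_nat_1 of_nat_mono)
qed

lemma R_pos: "R > 0"
  using AC_le_R A_pos C_pos by (smt (verit) mult_pos_pos)

definition sample_basis :: "(nat \<Rightarrow> nat) \<Rightarrow> nat \<Rightarrow> (nat \<Rightarrow> complex) list" where
  "sample_basis om t = foldl (\<lambda>Q i. gs_step n Q (vvec s w n (om i))) [] [0..<t]"

lemma sample_basis_0: "sample_basis om 0 = []"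
  by (simp add: sample_basis_def)

lemma sample_basis_Suc:
  "sample_basis om (Suc t) = gs_step n (sample_basis om t) (vvec s w n (om t))"
  by (simp add: sample_basis_def)

lemma sample_basis_upd: "t' \<le> t \<Longrightarrow> sample_basis (om(t := y)) t' = sample_basis om t'"
  by (induction t') (auto simp: sample_basis_0 sample_basis_Suc)

lemma orthonormal_sample_basis: "orthonormal n (sample_basis om t)"
  by (induction t) (simp_all add: sample_basis_0 sample_basis_Suc orthonormal_Nil
      orthonormal_gs_step)

lemma cip_sample_basis_eq_0:
  "\<forall>t'<t. cip n d (vvec s w n (om t')) = 0 \<Longrightarrow> i < length (sample_basis om t) \<Longrightarrow>
    cip n d (sample_basis om t ! i) = 0"
proof (induction t arbitrary: i)
  case (Suc t)
  then show ?case
    unfolding sample_basis_Suc by (intro cip_gs_step_eq_0) auto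
qed (simp add: sample_basis_0)

lemma inj_on_Sigma_hat_if_full:
  assumes full: "length (sample_basis om m) = n"
  shows "inj_on (Sigma_hat s w n p m om) (Cn n)"
proof (rule inj_on_Sigma_hat)
  fix d assume d: "d \<in> Cn n" and perp: "\<forall>t<m. cip n d (vvec s w n (om t)) = 0"
  have "d k = 0" if "k < n" for k
  proof -
    have "perp_proj n (sample_basis om m) d k = 0"
      by (rule perp_proj_eq_0_if_full[OF orthonormal_sample_basis full that])
    then show ?thesis
      using cip_sample_basis_eq_0[OF perp] full by (simp add: perp_proj_def)
  qed
  then show "d = (\<lambda>_. 0)" using d by (intro Cn_eqI zero_in_Cn) auto
qed

definition codim :: "(nat \<Rightarrow> nat) \<Rightarrow> nat \<Rightarrow> real" where
  "codim om t = real n - real (length (sample_basis om t))"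

definition enlarging :: "(nat \<Rightarrow> nat) \<Rightarrow> nat \<Rightarrow> nat set" where
  "enlarging om t = {j. cnorm n (perp_proj n (sample_basis om t) (vvec s w n j)) \<noteq> 0}"

lemma codim_nonneg: "codim om t \<ge> 0"
  using length_orthonormal_le[OF orthonormal_sample_basis[of om t]] by (simp add: codim_def)

lemma codim_le: "codim om t \<le> real n"
  by (simp add: codim_def)

lemma codim_Suc: "codim (om(t := y)) (Suc t) = codim om t - indicator (enlarging om t) y"
  by (simp add: codim_def sample_basis_Suc sample_basis_upd gs_step_def enlarging_def indicator_def)

abbreviation q :: real where
  "q \<equiv> 1 - A * C / R"

lemma q_nonneg: "q \<ge> 0"
  using AC_le_R R_pos by (simp add: divide_le_eq)

lemma expectation_codim_Suc_le:
  "measure_pmf.expectation p (\<lambda>y. codim om t - indicator (enlarging om t) y) \<le> q * codim om t"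
proof -
  have "integrable (measure_pmf p) (\<lambda>y. indicator (enlarging om t) y :: real)"
    by (rule measure_pmf.integrable_const_bound[where B = 1]) auto
  then have "measure_pmf.expectation p (\<lambda>y. codim om t - indicator (enlarging om t) y)
      = codim om t - measure_pmf.prob p (enlarging om t)"
    by (simp add: Bochner_Integration.integral_diff)
  moreover have "A * C / R * codim om t \<le> measure_pmf.prob p (enlarging om t)"
    using codim_le_prob_enlarge[OF orthonormal_sample_basis[of om t]] R_pos
    by (simp add: codim_def enlarging_def divide_le_eq mult.commute mult.left_commute)
  ultimately show ?thesis by (simp add: algebra_simps)
qed

lemma nn_integral_codim_Suc_le:
  "(\<integral>\<^sup>+ y. ennreal (codim om t - indicator (enlarging om t) y) \<partial>p)
     \<le> ennreal q * ennreal (codim om t)"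
proof -
  have "integrable (measure_pmf p) (\<lambda>y. codim om t - indicator (enlarging om t) y)"
    by (rule measure_pmf.integrable_const_bound[where B = "real n + 1"])
       (use codim_le[of om t] codim_nonneg[of om t] in \<open>auto simp: indicator_def\<close>)
  then have "(\<integral>\<^sup>+ y. ennreal (codim om t - indicator (enlarging om t) y) \<partial>p)
      = ennreal (measure_pmf.expectation p (\<lambda>y. codim om t - indicator (enlarging om t) y))"
    by (rule nn_integral_eq_integral)
       (intro AE_I2, metis codim_Suc codim_nonneg)
  also have "\<dots> \<le> ennreal (q * codim om t)" by (rule ennreal_leI[OF expectation_codim_Suc_le])
  also have "\<dots> = ennreal q * ennreal (codim om t)" by (rule ennreal_mult[OF q_nonneg codim_nonneg])
  finally show ?thesis .
qed

lemma nn_integral_codim_le: "(\<integral>\<^sup>+ om. ennreal (codim om t) \<partial>sample p t) \<le> ennreal (real n * q ^ t)"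
proof (induction t)
  case 0
  then show ?case by (simp add: sample_def codim_def sample_basis_0)
next
  case (Suc t)
  have "(\<integral>\<^sup>+ om. ennreal (codim om (Suc t)) \<partial>sample p (Suc t))
      = (\<integral>\<^sup>+ om. (\<integral>\<^sup>+ y. ennreal (codim om t - indicator (enlarging om t) y) \<partial>p) \<partial>sample p t)"
    by (simp add: sample_Suc codim_Suc)
  also have "\<dots> \<le> (\<integral>\<^sup>+ om. ennreal q * ennreal (codim om t) \<partial>sample p t)"
    by (intro nn_integral_mono nn_integral_codim_Suc_le)
  also have "\<dots> = ennreal q * (\<integral>\<^sup>+ om. ennreal (codim om t) \<partial>sample p t)"
    by (rule nn_integral_cmult) simp
  also have "\<dots> \<le> ennreal q * ennreal (real n * q ^ t)"
    by (rule mult_left_mono[OF Suc.IH]) simp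
  also have "\<dots> = ennreal (real n * q ^ Suc t)"
    using q_nonneg by (simp add: ennreal_mult[symmetric] mult_ac)
  finally show ?case .
qed

lemma prob_codim_ge_1_le: "measure_pmf.prob (sample p t) {om. codim om t \<ge> 1} \<le> real n * q ^ t"
proof -
  have "emeasure (measure_pmf (sample p t)) {om. codim om t \<ge> 1}
      = (\<integral>\<^sup>+ om. indicator {om. codim om t \<ge> 1} om \<partial>sample p t)" by simp
  also have "\<dots> \<le> (\<integral>\<^sup>+ om. ennreal (codim om t) \<partial>sample p t)"
    by (rule nn_integral_mono) (auto simp: indicator_def)
  also have "\<dots> \<le> ennreal (real n * q ^ t)" by (rule nn_integral_codim_le)
  finally show ?thesis
    using q_nonneg by (simp add: measure_pmf.emeasure_eq_measure ennreal_le_iff)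
qed

lemma bij_betw_Sigma_hat_if_codim_lt_1:
  assumes "codim om m < 1"
  shows "bij_betw (Sigma_hat s w n p m om) (Cn n) (Cn n)"
proof -
  have "length (sample_basis om m) = n"
    using assms length_orthonormal_le[OF orthonormal_sample_basis[of om m]] by (simp add: codim_def)
  then show ?thesis by (rule cn_linear_bij[OF cn_linear_Sigma_hat inj_on_Sigma_hat_if_full])
qed

lemma prob_bij_betw_Sigma_hat_ge:
  assumes \<delta>: "0 < \<delta>" "\<delta> < 1"
    and m: "real m \<ge> 8 / 3 * (B * D) / (A\<^sup>2 * C\<^sup>2) * R * ln (2 * real n / \<delta>)"
  shows "measure_pmf.prob (sample p m) {om. codim om m < 1} \<ge> 1 - \<delta>"
proof -
  let ?a = "A * C / R" and ?L = "ln (2 * real n / \<delta>)"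
  have L_nonneg: "?L \<ge> 0" using \<delta> n_pos by (simp add: field_simps)
  have "A * C \<le> B * D" using A_pos A_le_B C_pos C_le_D by (intro mult_mono) auto
  then have "1 \<le> (B * D) / (A * C)" using A_pos C_pos by simp
  then have "1 * ?L \<le> 8 / 3 * ((B * D) / (A * C)) * ?L"
    using L_nonneg by (intro mult_right_mono) auto
  then have "?L \<le> 8 / 3 * ((B * D) / (A * C)) * ?L" by simp
  also have "\<dots> = (8 / 3 * (B * D) / (A\<^sup>2 * C\<^sup>2) * R * ?L) * ?a"
    using A_pos C_pos R_pos by (simp add: field_simps power2_eq_square)
  also have "\<dots> \<le> real m * ?a"
    using m A_pos C_pos R_pos by (intro mult_right_mono) auto
  finally have "real n * q ^ m \<le> \<delta>"
    using geometric_tail_le[of ?a n \<delta> m] A_pos C_pos R_pos AC_le_R n_pos \<delta> by simp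
  then have "measure_pmf.prob (sample p m) {om. codim om m \<ge> 1} \<le> \<delta>"
    using prob_codim_ge_1_le[of m] by simp
  moreover have "{om. codim om m < 1} = space (measure_pmf (sample p m)) - {om. codim om m \<ge> 1}"
    by auto
  then have "measure_pmf.prob (sample p m) {om. codim om m < 1}
      = 1 - measure_pmf.prob (sample p m) {om. codim om m \<ge> 1}"
    using measure_pmf.prob_compl[of "{om. codim om m \<ge> 1}" "sample p m"] by simp
  ultimately show ?thesis by simp
qed

lemma prob_wls_good_ge:
  assumes "0 < \<delta>" "\<delta> < 1"
    and "real m \<ge> 8 / 3 * (B * D) / (A\<^sup>2 * C\<^sup>2) * R * ln (2 * real n / \<delta>)"
  shows "measure_pmf.prob (sample p m)
      {om. bij_betw (Sigma_hat s w n p m om) (Cn n) (Cn n)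
         \<and> (\<exists>x. is_wls_solution s w n p m om f x
              \<and> (\<forall>y. is_wls_solution s w n p m om f y \<longrightarrow> y = x)
              \<and> norm (f - synth w (iota n x))
                  \<le> norm (Pperp w n f) * sqrt (1 + (onorm (\<lambda>h. synth w (iota n
                        (inv_into (Cn n) (Sigma_hat s w n p m om) (Gamma_hat s w n p m om h)))))\<^sup>2))}
      \<ge> 1 - \<delta>"
    (is "_ \<le> measure_pmf.prob _ ?good")
proof -
  have "1 - \<delta> \<le> measure_pmf.prob (sample p m) {om. codim om m < 1}"
    by (rule prob_bij_betw_Sigma_hat_ge[OF assms])
  also have "\<dots> \<le> measure_pmf.prob (sample p m) ?good"
    using bij_betw_Sigma_hat_if_codim_lt_1
      wls_solution_exists_unique[unfolded wls_error_op_def[abs_def] Sigma_hat_inv_def]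
    by (intro measure_pmf.finite_measure_mono) auto
  finally show ?thesis .
qed

end

theorem corollary3p2:
  fixes s w :: "nat \<Rightarrow> 'h::{complex_inner, complete_space}"
    and A B C D :: real and n :: nat and p :: "nat pmf"
  assumes separable: "separable_space (euclidean :: 'h topology)"
    and frame: "is_frame_for_span s A B"
    and riesz: "is_riesz_basis_for_span w C D"
    and n_pos: "n \<ge> 1"
    and A_i: "clspan (range w) \<inter> orth_comp (clspan (range s)) = {0}"
    and A_ii_R: "bdd_above ((\<lambda>j. (cnorm n (vvec s w n j))\<^sup>2 / pmf p j) ` set_pmf p)"
    and A_ii_R': "bdd_above ((\<lambda>j. (norm (uvec s w n j))\<^sup>2 / pmf p j) ` set_pmf p)"
    and A_iii: "\<And>j. vvec s w n j \<noteq> (\<lambda>_. 0) \<Longrightarrow> pmf p j > 0"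
    and W_sub_S: "clspan (range w) \<subseteq> clspan (range s)"
  shows "mat_norm n (Sigma s w n) \<le> B * D
     \<and> bij_betw (Sigma s w n) (Cn n) (Cn n)
     \<and> mat_norm n (inv_into (Cn n) (Sigma s w n)) \<le> 1 / (A * C)
     \<and> mat_norm n (Sigma s w n) * mat_norm n (inv_into (Cn n) (Sigma s w n)) \<le> (B * D) / (A * C)
     \<and> (\<forall>(f::'h) (\<delta>::real) (m::nat). 0 < \<delta> \<and> \<delta> < 1 \<and>
          real m \<ge> 8 / 3 * (B * D) / (A\<^sup>2 * C\<^sup>2) * Rconst s w n p * ln (2 * real n / \<delta>) \<longrightarrow>
          measure_pmf.prob (sample p m)
            {om. bij_betw (Sigma_hat s w n p m om) (Cn n) (Cn n)
               \<and> (\<exists>x. is_wls_solution s w n p m om f x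
                    \<and> (\<forall>y. is_wls_solution s w n p m om f y \<longrightarrow> y = x)
                    \<and> norm (f - synth w (iota n x))
                        \<le> norm (Pperp w n f) * sqrt (1 + (onorm (\<lambda>h. synth w (iota n
                              (inv_into (Cn n) (Sigma_hat s w n p m om) (Gamma_hat s w n p m om h)))))\<^sup>2))}
          \<ge> 1 - \<delta>)"
proof -
  interpret sampling_bounded w s A B C D n p
    using frame riesz W_sub_S A_iii n_pos A_ii_R by unfold_locales auto
  show ?thesis
    using mat_norm_Sigma_le bij_betw_Sigma mat_norm_inv_Sigma_le condition_number_Sigma_le n_pos
      prob_wls_good_ge
    by blast
qed

end
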